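(* Let $\Delta$ be a pure simplicial complex of dimension $m-1\ge2$ whose clique decomposition $\Delta=\Delta_1\cup\cdots\cup\Delta_r$ satisfies conditions (i) and (ii), and such that each clique $\Delta_i$ is a single $(m-1)$-simplex. Then: (a) if $\Delta$ is closed, then $J_\Delta$ is generated by a regular sequence; (b) for every finite simple graph $G$ and every integer $m\ge|V(G)|$ (with $m\ge 3$), there exists a closed pure $(m-1)$-dimensional simplicial complex $\Delta$ satisfying (i) and (ii), each of whose cliques is a single $(m-1)$-simplex, with $G_\Delta\cong G$; (c) if $\dim\Delta+1$ is greater than or equal to the number of facets of $\Delta$, then $\Delta$ is closed.
   Context: Let $K$ be a field, $X=(x_{ij})$ an $m\times n$ matrix of indeterminates, $S=K[X]$, and $\Delta$ a pure $(m-1)$-dimensional simplicial complex on $[n]$. For $1\le a_1<\dots<a_m\le n$, $[a_1\ldots a_m]$ is the maximal minor with columns $a_1,\dots,a_m$; $J_\Delta=(\mu_F : F\in\mathcal{F}(\Delta))$ with $\mu_F=[a_1\ldots a_m]$ for a facet $F=\{a_1<\dots<a_m\}$. Clique decomposition: let $\mathcal{S}$ be the set of simplices $\Gamma$ with vertices in $[n]$, $\dim\Gamma\ge m-1$, whose $(m-1)$-skeleton is contained in $\Delta$; the maximal elements $\Gamma_1,\dots,\Gamma_r$ of $\mathcal{S}$ give the cliques $\Delta_i=\Gamma_i^{(m-1)}$, $\Delta=\Delta_1\cup\cdots\cup\Delta_r$; $V(\Delta_i)$ is the vertex set of $\Delta_i$. Conditions: (i) $|V(\Delta_i)\cap V(\Delta_j)|\le1$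 for all $i<j$; (ii) $V(\Delta_i)\cap V(\Delta_j)\cap V(\Delta_k)=\emptyset$ for all $i<j<k$. $G_\Delta$ is the simple graph on vertices $v_1,\dots,v_r$ with an edge $\{v_i,v_j\}$ ($i\ne j$) iff $V(\Delta_i)\cap V(\Delta_j)\ne\emptyset$. $\Delta$ is closed with respect to a labeling of its vertices by $[n]$ if for any two facets $F=\{a_1<\dots<a_m\}$, $G=\{b_1<\dots<b_m\}$ with $a_i=b_i$ for some $i$, every $m$-subset of $F\cup G$ is a facet of $\Delta$; $\Delta$ is closed if some labeling makes it closed (in (a), $J_\Delta$ is formed with respect to such a labeling). *)

theory Defs
  imports "HOL-Library.Poly_Mapping" "HOL-Combinatorics.Permutations"
begin

text \<open>The ring S = K[X] of the paper is
  the subring of polynomials all of whose variables lie in [m] x [n].\<close>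

type_synonym 'a mpoly = "((nat \<times> nat) \<Rightarrow>\<^sub>0 nat) \<Rightarrow>\<^sub>0 'a"

definition xvar :: "nat \<Rightarrow> nat \<Rightarrow> 'a::comm_ring_1 mpoly" where
  "xvar i j = Poly_Mapping.single (Poly_Mapping.single (i, j) 1) 1"

definition polyring :: "nat \<Rightarrow> nat \<Rightarrow> 'a::comm_ring_1 mpoly set" where
  "polyring m n = {p :: 'a mpoly. \<forall>mon \<in> Poly_Mapping.keys p. Poly_Mapping.keys mon \<subseteq> ({1..m} \<times> {1..n})}"

definition ideal_gen :: "'a::comm_ring_1 set \<Rightarrow> 'a set \<Rightarrow> 'a set" where
  "ideal_gen R A = {p. \<exists>c. (\<forall>a\<in>A. c a \<in> R) \<and> p = (\<Sum>a\<in>A. c a * a)}"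

definition regular_sequence :: "'a::comm_ring_1 set \<Rightarrow> 'a list \<Rightarrow> bool" where
  "regular_sequence R fs \<longleftrightarrow>
     set fs \<subseteq> R \<and> ideal_gen R (set fs) \<noteq> R \<and>
     (\<forall>i < length fs. \<forall>g \<in> R.
        g * fs ! i \<in> ideal_gen R (set (take i fs)) \<longrightarrow> g \<in> ideal_gen R (set (take i fs)))"

text \<open>Maximal minor [a_1 ... a_m] of the m x n matrix X = (x_ij), columns F = {a_1<...<a_m}.\<close>
definition maxminor :: "nat \<Rightarrow> nat set \<Rightarrow> 'a::comm_ring_1 mpoly" where
  "maxminor m F = (let a = sorted_list_of_set F in
     \<Sum>\<sigma> \<in> {\<sigma>. \<sigma> permutes {0..<m}}. of_int (sign \<sigma>) * (\<Prod>i<m. xvar (Suc i) (a ! \<sigma> i)))"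

definition J_Delta :: "nat \<Rightarrow> nat \<Rightarrow> nat set set \<Rightarrow> 'a::comm_ring_1 mpoly set" where
  "J_Delta m n Fs = ideal_gen (polyring m n) (maxminor m ` Fs)"

text \<open>A pure (m-1)-dimensional simplicial complex on [n], represented by its
  (nonempty) set of facets, each an m-subset of [n].\<close>
definition pure_complex :: "nat \<Rightarrow> nat \<Rightarrow> nat set set \<Rightarrow> bool" where
  "pure_complex m n Fs \<longleftrightarrow> Fs \<noteq> {} \<and> (\<forall>F\<in>Fs. F \<subseteq> {1..n} \<and> card F = m)"

definition clique_simplices :: "nat \<Rightarrow> nat \<Rightarrow> nat set set \<Rightarrow> nat set set" where
  "clique_simplices m n Fs = {\<Gamma>. \<Gamma> \<subseteq> {1..n} \<and> m \<le> card \<Gamma> \<and>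
      (\<forall>A. A \<subseteq> \<Gamma> \<and> card A = m \<longrightarrow> A \<in> Fs)}"

text \<open>Vertex sets V(Delta_i) of the cliques: the maximal elements of S.\<close>
definition cliques :: "nat \<Rightarrow> nat \<Rightarrow> nat set set \<Rightarrow> nat set set" where
  "cliques m n Fs = {\<Gamma> \<in> clique_simplices m n Fs.
      \<not> (\<exists>\<Gamma>' \<in> clique_simplices m n Fs. \<Gamma> \<subset> \<Gamma>')}"

definition cond_i :: "nat \<Rightarrow> nat \<Rightarrow> nat set set \<Rightarrow> bool" where
  "cond_i m n Fs \<longleftrightarrow> (\<forall>V\<in>cliques m n Fs. \<forall>W\<in>cliques m n Fs. V \<noteq> W \<longrightarrow> card (V \<inter> W) \<le> 1)"

definition cond_ii :: "nat \<Rightarrow> nat \<Rightarrow> nat set set \<Rightarrow> bool" where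
  "cond_ii m n Fs \<longleftrightarrow> (\<forall>U\<in>cliques m n Fs. \<forall>V\<in>cliques m n Fs. \<forall>W\<in>cliques m n Fs.
      U \<noteq> V \<and> U \<noteq> W \<and> V \<noteq> W \<longrightarrow> U \<inter> V \<inter> W = {})"

definition cliques_simplices :: "nat \<Rightarrow> nat \<Rightarrow> nat set set \<Rightarrow> bool" where
  "cliques_simplices m n Fs \<longleftrightarrow> (\<forall>V\<in>cliques m n Fs. card V = m)"

definition closed_wrt :: "nat \<Rightarrow> nat set set \<Rightarrow> bool" where
  "closed_wrt m Fs \<longleftrightarrow> (\<forall>F\<in>Fs. \<forall>G\<in>Fs.
     (\<exists>i<m. sorted_list_of_set F ! i = sorted_list_of_set G ! i) \<longrightarrow>
     (\<forall>A. A \<subseteq> F \<union> G \<and> card A = m \<longrightarrow> A \<in> Fs))"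

definition closed_complex :: "nat \<Rightarrow> nat \<Rightarrow> nat set set \<Rightarrow> bool" where
  "closed_complex m n Fs \<longleftrightarrow> (\<exists>\<pi>. bij_betw \<pi> {1..n} {1..n} \<and> closed_wrt m ((`) \<pi> ` Fs))"

definition simple_graph :: "'v set \<Rightarrow> 'v set set \<Rightarrow> bool" where
  "simple_graph V E \<longleftrightarrow> finite V \<and> (\<forall>e\<in>E. e \<subseteq> V \<and> card e = 2)"

definition clique_graph_iso :: "nat \<Rightarrow> nat \<Rightarrow> nat set set \<Rightarrow> 'v set \<Rightarrow> 'v set set \<Rightarrow> bool" where
  "clique_graph_iso m n Fs V E \<longleftrightarrow> (\<exists>f. bij_betw f (cliques m n Fs) V \<and>
     (\<forall>C\<in>cliques m n Fs. \<forall>D\<in>cliques m n Fs. C \<noteq> D \<longrightarrow>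
        ({f C, f D} \<in> E \<longleftrightarrow> C \<inter> D \<noteq> {})))"

end

theory Submission
  imports Defs
begin

(* (a) Give the variable x_ij the weight i*j. By the rearrangement inequality the diagonal
       x_{1,a_1} ... x_{m,a_m} is the unique heaviest monomial of the minor [a_1 ... a_m]. If the
       complex is closed and its cliques are single simplices, distinct facets never share their
       i-th vertex, so these leading monomials are pairwise coprime. A general weighted
       Buchberger-type argument (syzygies of coprime monomials are Koszul syzygies, which lift)
       shows that polynomials with pairwise coprime leading monomials form a regular sequence.
   (b), (c) Both rest on "position labellings": the p-th vertex of the j-th facet is q j p, and a
       vertex shared by facets j and l sits at position l in facet j and at position j in facet l.
       Relabelling the vertices by rank of the key j + p makes such a complex closed. For (b) an
       explicit labelling realizes any graph; for (c) a labelling exists whenever there are at most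
       m facets, any two meeting in at most one vertex and no vertex lying in three of them. *)

type_synonym mon = "(nat \<times> nat) \<Rightarrow>\<^sub>0 nat"

abbreviation mons :: "'a::zero mpoly \<Rightarrow> mon set" where
  "mons p \<equiv> Poly_Mapping.keys p"

abbreviation vars :: "mon \<Rightarrow> (nat \<times> nat) set" where
  "vars \<mu> \<equiv> Poly_Mapping.keys \<mu>"

abbreviation xmon :: "mon \<Rightarrow> 'a::comm_ring_1 mpoly" where
  "xmon \<mu> \<equiv> Poly_Mapping.single \<mu> 1"

definition mpart :: "(mon \<Rightarrow> bool) \<Rightarrow> 'a::comm_ring_1 mpoly \<Rightarrow> 'a mpoly" where
  "mpart P p = Poly_Mapping.mapp (\<lambda>\<nu> c. if P \<nu> then c else 0) p"

lemma lookup_mpart: "Poly_Mapping.lookup (mpart P p) \<nu> = (if P \<nu> then Poly_Mapping.lookup p \<nu> else 0)"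
  by (simp add: mpart_def lookup_mapp when_def in_keys_iff)

lemma mons_mpart: "mons (mpart P p) = {\<nu> \<in> mons p. P \<nu>}"
  by (auto simp: in_keys_iff lookup_mpart split: if_splits)

lemma mpart_add: "mpart P (p + q) = mpart P p + mpart P q"
  by (rule poly_mapping_eqI) (simp add: lookup_mpart lookup_add)

lemma mpart_sum: "mpart P (sum f A) = (\<Sum>a\<in>A. mpart P (f a))"
proof (induction A rule: infinite_finite_induct)
  case (insert a A)
  then show ?case by (simp add: mpart_add)
qed (simp_all add: poly_mapping_eqI lookup_mpart)

lemma mpart_none: "(\<And>\<nu>. \<nu> \<in> mons p \<Longrightarrow> \<not> P \<nu>) \<Longrightarrow> mpart P p = 0"
  by (rule poly_mapping_eqI) (auto simp: lookup_mpart in_keys_iff)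

lemma mpart_split: "p = mpart P p + mpart (\<lambda>\<nu>. \<not> P \<nu>) p"
  by (rule poly_mapping_eqI) (simp add: lookup_mpart lookup_add)

lemma lookup_mult_mono_shift:
  fixes p :: "'a::comm_ring_1 mpoly"
  shows "Poly_Mapping.lookup (p * xmon \<mu>) (\<nu> + \<mu>) = Poly_Mapping.lookup p \<nu>"
proof -
  have inner: "(\<Sum>q. (1 when \<mu> = q) when \<nu> + \<mu> = l + q) = ((1::'a) when l = \<nu>)" for l
  proof -
    have "(\<Sum>q. (1 when \<mu> = q) when \<nu> + \<mu> = l + q) = (\<Sum>q. ((1::'a) when \<nu> + \<mu> = l + q) when \<mu> = q)"
      by (simp add: when_when conj_commute)
    then show ?thesis by (auto simp: when_def)
  qed
  have "Poly_Mapping.lookup (p * xmon \<mu>) (\<nu> + \<mu>) =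
     (\<Sum>l. Poly_Mapping.lookup p l * (\<Sum>q. (1 when \<mu> = q) when \<nu> + \<mu> = l + q))"
    by (simp add: lookup_mult lookup_single)
  also have "\<dots> = (\<Sum>l. Poly_Mapping.lookup p l when l = \<nu>)"
    by (simp add: inner mult_when)
  finally show ?thesis by simp
qed

lemma mons_mult_mono:
  fixes p :: "'a::comm_ring_1 mpoly"
  shows "mons (p * xmon \<mu>) = (\<lambda>\<nu>. \<nu> + \<mu>) ` mons p"
proof
  show "mons (p * xmon \<mu>) \<subseteq> (\<lambda>\<nu>. \<nu> + \<mu>) ` mons p"
    using keys_mult[of p "xmon \<mu>"] by auto
  show "(\<lambda>\<nu>. \<nu> + \<mu>) ` mons p \<subseteq> mons (p * xmon \<mu>)"
    by (auto simp: in_keys_iff lookup_mult_mono_shift)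
qed

lemma lookup_mult_mono:
  fixes p :: "'a::comm_ring_1 mpoly"
  shows "Poly_Mapping.lookup (p * xmon \<mu>) \<kappa> =
     (if \<exists>\<nu>. \<kappa> = \<nu> + \<mu> then Poly_Mapping.lookup p (\<kappa> - \<mu>) else 0)"
proof (cases "\<exists>\<nu>. \<kappa> = \<nu> + \<mu>")
  case True
  then show ?thesis by (auto simp: lookup_mult_mono_shift)
next
  case False
  then have "\<kappa> \<notin> mons (p * xmon \<mu>)" by (auto simp: mons_mult_mono)
  then show ?thesis using False by (simp add: in_keys_iff)
qed

lemma poly_as_sum: "(p::'a::comm_ring_1 mpoly) = (\<Sum>\<nu>\<in>mons p. Poly_Mapping.single \<nu> (Poly_Mapping.lookup p \<nu>))"
proof (rule poly_mapping_eqI)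
  fix \<kappa>
  show "Poly_Mapping.lookup p \<kappa> = Poly_Mapping.lookup (\<Sum>\<nu>\<in>mons p. Poly_Mapping.single \<nu> (Poly_Mapping.lookup p \<nu>)) \<kappa>"
    by (cases "\<kappa> \<in> mons p") (simp_all add: lookup_sum lookup_single when_def in_keys_iff)
qed

lemma vars_add: "vars ((a::mon) + b) = vars a \<union> vars b"
  by (auto simp: in_keys_iff lookup_add)

lemma mons_diff: "mons ((a::'a::comm_ring_1 mpoly) - b) \<subseteq> mons a \<union> mons b"
  by (auto simp: in_keys_iff lookup_minus)

lemma mons_uminus: "mons (- (a::'a::comm_ring_1 mpoly)) = mons a"
  by (auto simp: in_keys_iff)

lemma mons_mult_bound:
  fixes p q :: "'a::comm_ring_1 mpoly"
  assumes "\<And>a b. a \<in> mons p \<Longrightarrow> b \<in> mons q \<Longrightarrow> P (a + b)" and "\<nu> \<in> mons (p * q)"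
  shows "P \<nu>"
  using keys_mult[of p q] assms by blast

lemma mons_sum_bound:
  assumes "\<And>i \<nu>. i \<in> S \<Longrightarrow> \<nu> \<in> mons (f i) \<Longrightarrow> P \<nu>" and "\<nu> \<in> mons (sum f S)"
  shows "P \<nu>"
  using keys_sum[of f S] assms by blast

lemma coprime_mon_divides:
  fixes \<nu> \<mu> \<rho> \<mu>' :: mon
  assumes "vars \<mu> \<inter> vars \<mu>' = {}" "\<nu> + \<mu> = \<rho> + \<mu>'"
  shows "\<nu> = (\<nu> - \<mu>') + \<mu>'"
proof (rule poly_mapping_eqI)
  fix x
  have "Poly_Mapping.lookup \<mu>' x \<le> Poly_Mapping.lookup \<nu> x"
  proof (cases "x \<in> vars \<mu>'")
    case True
    then have "Poly_Mapping.lookup \<mu> x = 0" using assms(1) by (auto simp: in_keys_iff)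
    moreover have "Poly_Mapping.lookup (\<nu> + \<mu>) x = Poly_Mapping.lookup (\<rho> + \<mu>') x"
      using assms(2) by simp
    ultimately show ?thesis by (simp add: lookup_add)
  qed (simp add: in_keys_iff)
  then show "Poly_Mapping.lookup \<nu> x = Poly_Mapping.lookup (\<nu> - \<mu>' + \<mu>') x"
    by (simp add: lookup_add lookup_minus)
qed

text \<open>The weight of a monomial: the variable \<open>x\<^sub>i\<^sub>j\<close> has weight \<open>i \<cdot> j\<close>.
  With respect to it, the leading monomial of a maximal minor is its diagonal.\<close>
definition wt :: "mon \<Rightarrow> nat" where
  "wt \<nu> = (\<Sum>x\<in>vars \<nu>. Poly_Mapping.lookup \<nu> x * (fst x * snd x))"

lemma wt_add: "wt (a + b) = wt a + wt b"
  unfolding wt_def by (rule setsum_keys_plus_distrib) (auto simp: algebra_simps)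

lemma wt_zero [simp]: "wt 0 = 0"
  by (simp add: wt_def)

lemma wt_single: "wt (Poly_Mapping.single x k) = k * (fst x * snd x)"
  by (simp add: wt_def)

lemma wt_sum: "wt (sum f S) = (\<Sum>i\<in>S. wt (f i))"
  by (induction S rule: infinite_finite_induct) (auto simp: wt_add)

lemma polyring_iff: "p \<in> polyring m n \<longleftrightarrow> (\<forall>\<nu>\<in>mons p. vars \<nu> \<subseteq> {1..m} \<times> {1..n})"
  by (simp add: polyring_def)

lemma polyring_zero [simp]: "0 \<in> polyring m n"
  by (simp add: polyring_iff)

lemma polyring_add: "p \<in> polyring m n \<Longrightarrow> q \<in> polyring m n \<Longrightarrow> p + q \<in> polyring m n"
  unfolding polyring_iff using keys_add[of p q] by blast

lemma polyring_diff: "p \<in> polyring m n \<Longrightarrow> q \<in> polyring m n \<Longrightarrow> p - q \<in> polyring m n"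
  unfolding polyring_iff using mons_diff[of p q] by blast

lemma polyring_uminus: "p \<in> polyring m n \<Longrightarrow> - p \<in> polyring m n"
  unfolding polyring_iff by (simp add: mons_uminus)

lemma polyring_mult:
  assumes "p \<in> polyring m n" "q \<in> polyring m n"
  shows "p * q \<in> polyring m n"
  unfolding polyring_iff
proof
  fix \<nu> assume "\<nu> \<in> mons (p * q)"
  then show "vars \<nu> \<subseteq> {1..m} \<times> {1..n}"
    by (rule mons_mult_bound[rotated]) (use assms in \<open>auto simp: polyring_iff vars_add\<close>)
qed

lemma polyring_sum: "(\<And>a. a \<in> S \<Longrightarrow> f a \<in> polyring m n) \<Longrightarrow> sum f S \<in> polyring m n"
  by (induction S rule: infinite_finite_induct) (auto intro: polyring_add)

lemma polyring_mpart: "p \<in> polyring m n \<Longrightarrow> mpart P p \<in> polyring m n"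
  unfolding polyring_iff by (auto simp: mons_mpart)

lemma polyring_single: "vars \<nu> \<subseteq> {1..m} \<times> {1..n} \<Longrightarrow> Poly_Mapping.single \<nu> c \<in> polyring m n"
  unfolding polyring_iff by auto

lemma polyring_quotient:
  assumes "p \<in> polyring m n" and "\<And>\<rho>. \<rho> \<in> mons b \<Longrightarrow> \<rho> + \<mu> \<in> mons p"
  shows "b \<in> polyring m n"
  using assms unfolding polyring_iff by (fastforce simp: vars_add)

abbreviation gen_ideal :: "nat \<Rightarrow> nat \<Rightarrow> 'a::comm_ring_1 mpoly set \<Rightarrow> 'a mpoly set" where
  "gen_ideal m n A \<equiv> ideal_gen (polyring m n) A"

lemma gen_ideal_comb:
  "(\<And>a. a \<in> A \<Longrightarrow> c a \<in> polyring m n) \<Longrightarrow> (\<Sum>a\<in>A. c a * a) \<in> gen_ideal m n A"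
  unfolding ideal_gen_def by blast

lemma gen_ideal_zero: "0 \<in> gen_ideal m n A"
  using gen_ideal_comb[of A "\<lambda>_. 0"] by simp

lemma gen_ideal_add:
  assumes "p \<in> gen_ideal m n A" "q \<in> gen_ideal m n A"
  shows "p + q \<in> gen_ideal m n A"
proof -
  obtain c1 where c1: "\<forall>a\<in>A. c1 a \<in> polyring m n" "p = (\<Sum>a\<in>A. c1 a * a)"
    using assms(1) unfolding ideal_gen_def by blast
  obtain c2 where c2: "\<forall>a\<in>A. c2 a \<in> polyring m n" "q = (\<Sum>a\<in>A. c2 a * a)"
    using assms(2) unfolding ideal_gen_def by blast
  have "p + q = (\<Sum>a\<in>A. (c1 a + c2 a) * a)"
    by (simp add: c1 c2 sum.distrib distrib_right)
  then show ?thesis using c1 c2 by (auto intro!: gen_ideal_comb polyring_add)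
qed

lemma gen_ideal_diff:
  assumes "p \<in> gen_ideal m n A" "q \<in> gen_ideal m n A"
  shows "p - q \<in> gen_ideal m n A"
proof -
  obtain c1 where c1: "\<forall>a\<in>A. c1 a \<in> polyring m n" "p = (\<Sum>a\<in>A. c1 a * a)"
    using assms(1) unfolding ideal_gen_def by blast
  obtain c2 where c2: "\<forall>a\<in>A. c2 a \<in> polyring m n" "q = (\<Sum>a\<in>A. c2 a * a)"
    using assms(2) unfolding ideal_gen_def by blast
  have "p - q = (\<Sum>a\<in>A. (c1 a - c2 a) * a)"
    by (simp add: c1 c2 sum_subtractf left_diff_distrib)
  then show ?thesis using c1 c2 by (auto intro!: gen_ideal_comb polyring_diff)
qed

lemma gen_ideal_mult:
  assumes "r \<in> polyring m n" "p \<in> gen_ideal m n A"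
  shows "r * p \<in> gen_ideal m n A"
proof -
  obtain c where c: "\<forall>a\<in>A. c a \<in> polyring m n" "p = (\<Sum>a\<in>A. c a * a)"
    using assms(2) unfolding ideal_gen_def by blast
  have "r * p = (\<Sum>a\<in>A. (r * c a) * a)" by (simp add: c sum_distrib_left mult.assoc)
  then show ?thesis using c assms(1) by (auto intro!: gen_ideal_comb polyring_mult)
qed

lemma gen_ideal_subset: "A \<subseteq> polyring m n \<Longrightarrow> gen_ideal m n A \<subseteq> polyring m n"
  unfolding ideal_gen_def by (auto intro!: polyring_sum polyring_mult)

definition leads :: "'a::comm_ring_1 mpoly \<Rightarrow> mon \<Rightarrow> bool" where
  "leads f \<mu> \<longleftrightarrow> (\<forall>\<nu>\<in>mons (f - xmon \<mu>). wt \<nu> < wt \<mu>)"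

lemma leads_tail: "leads f \<mu> \<Longrightarrow> \<tau> \<in> mons (f - xmon \<mu>) \<Longrightarrow> wt \<tau> < wt \<mu>"
  unfolding leads_def by blast

lemma leads_mon: assumes "leads f \<mu>" shows "\<mu> \<in> mons f"
proof -
  have "\<mu> \<notin> mons (f - xmon \<mu>)" using assms unfolding leads_def by blast
  then show ?thesis by (simp add: in_keys_iff lookup_minus)
qed

lemma leads_mons_le:
  fixes f :: "'a::comm_ring_1 mpoly"
  assumes "leads f \<mu>" "\<tau> \<in> mons f"
  shows "wt \<tau> \<le> wt \<mu>"
proof (cases "\<tau> = \<mu>")
  case False
  then have "\<tau> \<in> mons (f - xmon \<mu>)" using assms(2) by (simp add: in_keys_iff lookup_minus lookup_single)
  then show ?thesis using assms(1) leads_tail less_imp_le by blast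
qed simp

lemma leads_unique:
  fixes f :: "'a::comm_ring_1 mpoly"
  assumes "leads f \<mu>" "leads f \<nu>"
  shows "\<mu> = \<nu>"
proof (rule ccontr)
  assume ne: "\<mu> \<noteq> \<nu>"
  then have "\<mu> \<in> mons (f - xmon \<nu>)" "\<nu> \<in> mons (f - xmon \<mu>)"
    using leads_mon[OF assms(1)] leads_mon[OF assms(2)]
    by (simp_all add: in_keys_iff lookup_minus lookup_single)
  then have "wt \<mu> < wt \<nu>" "wt \<nu> < wt \<mu>"
    using leads_tail[OF assms(2)] leads_tail[OF assms(1)] by auto
  then show False by simp
qed

definition coprime_leads :: "nat \<Rightarrow> nat \<Rightarrow> 'a::comm_ring_1 mpoly set \<Rightarrow> ('a mpoly \<Rightarrow> mon) \<Rightarrow> bool" where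
  "coprime_leads m n A lm \<longleftrightarrow> finite A \<and> (\<forall>f\<in>A. f \<in> polyring m n \<and> leads f (lm f) \<and> 0 < wt (lm f)) \<and>
     (\<forall>f\<in>A. \<forall>g\<in>A. f \<noteq> g \<longrightarrow> vars (lm f) \<inter> vars (lm g) = {})"

lemma coprime_leads_subset: "coprime_leads m n B lm \<Longrightarrow> A \<subseteq> B \<Longrightarrow> coprime_leads m n A lm"
  unfolding coprime_leads_def by (meson finite_subset subsetD)

lemma coprime_leadsD:
  assumes "coprime_leads m n A lm" "f \<in> A"
  shows "f \<in> polyring m n" "leads f (lm f)" "0 < wt (lm f)"
    "xmon (lm f) \<in> polyring m n" "f - xmon (lm f) \<in> polyring m n"
proof -
  show f: "f \<in> polyring m n" "leads f (lm f)" "0 < wt (lm f)"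
    using assms unfolding coprime_leads_def by auto
  show lead: "xmon (lm f) \<in> polyring m n"
    using leads_mon[OF f(2)] f(1) by (intro polyring_single) (auto simp: polyring_iff)
  show "f - xmon (lm f) \<in> polyring m n" using f(1) lead by (rule polyring_diff)
qed

lemma coprime_leads_insert:
  assumes "coprime_leads m n (insert k A) lm" "k \<notin> A" "f \<in> A"
  shows "vars (lm k) \<inter> vars (lm f) = {}"
proof -
  have "k \<noteq> f" using assms(2,3) by blast
  then show ?thesis using assms(1,3) unfolding coprime_leads_def by blast
qed

definition coeffs_deg ::
    "nat \<Rightarrow> nat \<Rightarrow> ('a mpoly \<Rightarrow> mon) \<Rightarrow> 'a::comm_ring_1 mpoly set \<Rightarrow> (nat \<Rightarrow> bool) \<Rightarrow> ('a mpoly \<Rightarrow> 'a mpoly) \<Rightarrow> bool" where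
  "coeffs_deg m n lm A P c \<longleftrightarrow> (\<forall>f\<in>A. c f \<in> polyring m n \<and> (\<forall>\<nu>\<in>mons (c f). P (wt \<nu> + wt (lm f))))"

lemma coeffs_degD:
  "coeffs_deg m n lm A P c \<Longrightarrow> f \<in> A \<Longrightarrow> c f \<in> polyring m n"
  "coeffs_deg m n lm A P c \<Longrightarrow> f \<in> A \<Longrightarrow> \<nu> \<in> mons (c f) \<Longrightarrow> P (wt \<nu> + wt (lm f))"
  unfolding coeffs_deg_def by auto

lemma coeffs_deg_mono:
  "coeffs_deg m n lm A P c \<Longrightarrow> (\<And>d. P d \<Longrightarrow> Q d) \<Longrightarrow> coeffs_deg m n lm A Q c"
  unfolding coeffs_deg_def by blast

lemma mons_divisible_by_leads:
  fixes p :: "'a::comm_ring_1 mpoly"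
  assumes "\<forall>f\<in>A. vars \<mu> \<inter> vars (lm f) = {}"
    and "p * xmon \<mu> = (\<Sum>f\<in>A. q f * xmon (lm f))" and "\<nu> \<in> mons p"
  shows "\<exists>f\<in>A. \<nu> = (\<nu> - lm f) + lm f"
proof -
  have "\<nu> + \<mu> \<in> mons (p * xmon \<mu>)"
    using assms(3) by (simp add: mons_mult_mono)
  then have "\<nu> + \<mu> \<in> mons (\<Sum>f\<in>A. q f * xmon (lm f))"
    by (simp only: assms(2))
  then obtain f where "f \<in> A" "\<nu> + \<mu> \<in> mons (q f * xmon (lm f))"
    using keys_sum[of "\<lambda>f. q f * xmon (lm f)" A] by blast
  moreover from this obtain \<rho> where "\<nu> + \<mu> = \<rho> + lm f" by (auto simp: mons_mult_mono)
  ultimately show ?thesis using coprime_mon_divides assms(1) by blast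
qed

lemma split_by_divisors:
  fixes p :: "'a::comm_ring_1 mpoly"
  assumes "finite A" "\<forall>\<nu>\<in>mons p. \<exists>f\<in>A. \<nu> = (\<nu> - lm f) + lm f"
  shows "\<exists>b. (\<forall>f\<in>A. \<forall>\<rho>\<in>mons (b f). \<rho> + lm f \<in> mons p) \<and> p = (\<Sum>f\<in>A. b f * xmon (lm f))"
proof -
  define sel where "sel \<nu> = (SOME f. f \<in> A \<and> \<nu> = (\<nu> - lm f) + lm f)" for \<nu>
  have sel: "sel \<nu> \<in> A \<and> \<nu> = (\<nu> - lm (sel \<nu>)) + lm (sel \<nu>)" if "\<nu> \<in> mons p" for \<nu>
  proof -
    have "\<exists>f. f \<in> A \<and> \<nu> = (\<nu> - lm f) + lm f" using assms(2) that by blast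
    then show ?thesis unfolding sel_def by (rule someI_ex)
  qed
  define b where "b f = (\<Sum>\<nu>\<in>{\<nu>\<in>mons p. sel \<nu> = f}. Poly_Mapping.single (\<nu> - lm f) (Poly_Mapping.lookup p \<nu>))" for f
  have quot: "\<forall>f\<in>A. \<forall>\<rho>\<in>mons (b f). \<rho> + lm f \<in> mons p"
  proof (intro ballI)
    fix f \<rho> assume "f \<in> A" and rho: "\<rho> \<in> mons (b f)"
    from rho have "\<rho> \<in> (\<Union>\<nu>\<in>{\<nu>\<in>mons p. sel \<nu> = f}. mons (Poly_Mapping.single (\<nu> - lm f) (Poly_Mapping.lookup p \<nu>)))"
      unfolding b_def by (rule subsetD[OF keys_sum])
    then obtain \<nu> where nu: "\<nu> \<in> mons p" "sel \<nu> = f" "\<rho> \<in> mons (Poly_Mapping.single (\<nu> - lm f) (Poly_Mapping.lookup p \<nu>))"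
      by blast
    then have "\<rho> = \<nu> - lm f" by (simp split: if_splits)
    then show "\<rho> + lm f \<in> mons p" using sel[OF nu(1)] nu(1,2) by simp
  qed
  have prod: "b f * xmon (lm f) = (\<Sum>\<nu>\<in>{\<nu>\<in>mons p. sel \<nu> = f}. Poly_Mapping.single \<nu> (Poly_Mapping.lookup p \<nu>))" for f
    unfolding b_def sum_distrib_right
  proof (rule sum.cong)
    fix \<nu> assume "\<nu> \<in> {\<nu> \<in> mons p. sel \<nu> = f}"
    then have "\<nu> - lm f + lm f = \<nu>" using sel by auto
    then show "Poly_Mapping.single (\<nu> - lm f) (Poly_Mapping.lookup p \<nu>) * xmon (lm f) =
          Poly_Mapping.single \<nu> (Poly_Mapping.lookup p \<nu>)" by (simp add: mult_single)
  qed simp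
  have "(\<Sum>f\<in>A. b f * xmon (lm f)) = (\<Sum>f\<in>A. \<Sum>\<nu>\<in>{\<nu>\<in>mons p. sel \<nu> = f}. Poly_Mapping.single \<nu> (Poly_Mapping.lookup p \<nu>))"
    by (simp only: prod)
  also have "\<dots> = (\<Sum>\<nu>\<in>mons p. Poly_Mapping.single \<nu> (Poly_Mapping.lookup p \<nu>))"
    by (rule sum.group) (use assms(1) sel in auto)
  also have "\<dots> = p" by (rule poly_as_sum[symmetric])
  finally have "p = (\<Sum>f\<in>A. b f * xmon (lm f))" by simp
  then show ?thesis using quot by blast
qed

lemma coprime_quotient:
  fixes p :: "'a::comm_ring_1 mpoly"
  assumes "finite A" "\<forall>f\<in>A. vars \<mu> \<inter> vars (lm f) = {}"
    and "p * xmon \<mu> = (\<Sum>f\<in>A. q f * xmon (lm f))"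
  shows "\<exists>b. (\<forall>f\<in>A. \<forall>\<rho>\<in>mons (b f). \<rho> + lm f \<in> mons p) \<and> p = (\<Sum>f\<in>A. b f * xmon (lm f))"
proof (rule split_by_divisors[OF assms(1)])
  show "\<forall>\<nu>\<in>mons p. \<exists>f\<in>A. \<nu> = \<nu> - lm f + lm f"
    using mons_divisible_by_leads[OF assms(2,3)] by blast
qed

lemma mpart_mult_xmon:
  fixes c :: "'a::comm_ring_1 mpoly"
  shows "mpart (\<lambda>\<nu>. wt \<nu> = D) (c * xmon \<mu>) = mpart (\<lambda>\<nu>. wt \<nu> + wt \<mu> = D) c * xmon \<mu>"
proof (rule poly_mapping_eqI)
  fix \<kappa>
  show "Poly_Mapping.lookup (mpart (\<lambda>\<nu>. wt \<nu> = D) (c * xmon \<mu>)) \<kappa> =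
        Poly_Mapping.lookup (mpart (\<lambda>\<nu>. wt \<nu> + wt \<mu> = D) c * xmon \<mu>) \<kappa>"
    by (cases "\<exists>\<nu>. \<kappa> = \<nu> + \<mu>")
      (auto simp: lookup_mpart lookup_mult_mono_shift lookup_mult_mono wt_add)
qed

text \<open>The weight-\<open>D\<close> part of \<open>c \<cdot> f\<close>, where \<open>f\<close> is led by \<open>x\<^sup>\<mu>\<close> and every term of \<open>c \<cdot> x\<^sup>\<mu>\<close> has weight \<open>\<le> D\<close>,
  is the weight-\<open>D\<close> part of \<open>c \<cdot> x\<^sup>\<mu>\<close>: the tail of \<open>f\<close> only contributes lighter terms.\<close>
lemma top_part_mult_lead:
  fixes c f :: "'a::comm_ring_1 mpoly"
  assumes "leads f \<mu>" "\<forall>\<nu>\<in>mons c. wt \<nu> + wt \<mu> \<le> D"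
  shows "mpart (\<lambda>\<nu>. wt \<nu> = D) (c * f) = mpart (\<lambda>\<nu>. wt \<nu> + wt \<mu> = D) c * xmon \<mu>"
proof -
  have split: "c * f = c * xmon \<mu> + c * (f - xmon \<mu>)"
    by (simp add: algebra_simps)
  have "mpart (\<lambda>\<nu>. wt \<nu> = D) (c * (f - xmon \<mu>)) = 0"
  proof (rule mpart_none)
    fix \<kappa> assume "\<kappa> \<in> mons (c * (f - xmon \<mu>))"
    then show "wt \<kappa> \<noteq> D"
      by (rule mons_mult_bound[rotated]) (use assms leads_tail in \<open>fastforce simp: wt_add\<close>)
  qed
  then show ?thesis by (simp add: split mpart_add mpart_mult_xmon)
qed

lemma top_part_comb:
  assumes "coprime_leads m n A lm" "coeffs_deg m n lm A (\<lambda>d. d \<le> D) c"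
  shows "mpart (\<lambda>\<nu>. wt \<nu> = D) (\<Sum>f\<in>A. c f * f) =
    (\<Sum>f\<in>A. mpart (\<lambda>\<nu>. wt \<nu> + wt (lm f) = D) (c f) * xmon (lm f))"
  unfolding mpart_sum
  by (rule sum.cong) (use assms in \<open>auto intro!: top_part_mult_lead dest: coprime_leadsD coeffs_degD\<close>)

lemma mons_mult_tail:
  fixes b g :: "'a::comm_ring_1 mpoly"
  assumes "leads g \<mu>" "\<forall>\<rho>\<in>mons b. wt \<rho> + wt \<mu> + e = d" "\<nu> \<in> mons (b * (g - xmon \<mu>))"
  shows "wt \<nu> + e < d"
  using assms(3) by (rule mons_mult_bound[rotated]) (use assms(1,2) leads_tail in \<open>fastforce simp: wt_add\<close>)

lemma mons_sum_mult_tails: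
  fixes b :: "'a::comm_ring_1 mpoly \<Rightarrow> 'a mpoly"
  assumes "\<forall>f\<in>A. leads f (lm f)" "\<forall>f\<in>A. \<forall>\<rho>\<in>mons (b f). wt \<rho> + wt (lm f) + e = d"
    and "\<nu> \<in> mons (\<Sum>f\<in>A. b f * (f - xmon (lm f)))"
  shows "wt \<nu> + e < d"
  using assms(3) by (rule mons_sum_bound[rotated]) (use assms(1,2) mons_mult_tail in blast)

text \<open>The Koszul identity behind the syzygy \<open>L\<^sub>k f - L\<^sub>f k\<close> of two elements with leading parts \<open>L\<close>.\<close>
lemma koszul_identity:
  fixes b L :: "'a::comm_ring_1 \<Rightarrow> 'a"
  shows "(\<Sum>f\<in>A. b f * L f) * k =
    (\<Sum>f\<in>A. (b f * Lk) * f) + (\<Sum>f\<in>A. (b f * (k - Lk)) * f) - (\<Sum>f\<in>A. b f * (f - L f)) * k"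
proof -
  have "(\<Sum>f\<in>A. b f * L f) * k = (\<Sum>f\<in>A. (b f * Lk) * f + (b f * (k - Lk)) * f - (b f * (f - L f)) * k)"
    unfolding sum_distrib_right by (rule sum.cong) (simp_all add: algebra_simps)
  then show ?thesis by (simp add: sum.distrib sum_subtractf sum_distrib_right)
qed

text \<open>The corrections produced when a Koszul syzygy is lifted have weight \<open>< D\<close>: if \<open>b f\<close> has exact
  weight \<open>D\<close> against \<open>x\<^bsup>lm f\<^esup> x\<^bsup>lm k\<^esup>\<close>, then so does \<open>b f \<cdot> x\<^bsup>lm k\<^esup>\<close> against \<open>x\<^bsup>lm f\<^esup>\<close>, while
  \<open>b f \<cdot> (k - x\<^bsup>lm k\<^esup>)\<close> and \<open>\<Sum> b g \<cdot> (g - x\<^bsup>lm g\<^esup>)\<close> only involve the lighter tails.\<close>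
lemma koszul_correction_deg:
  fixes b c' :: "'a::comm_ring_1 mpoly \<Rightarrow> 'a mpoly"
  assumes cl: "coprime_leads m n (insert k A) lm"
    and bR: "\<forall>f\<in>A. b f \<in> polyring m n"
    and bW: "\<forall>f\<in>A. \<forall>\<rho>\<in>mons (b f). wt \<rho> + wt (lm f) + wt (lm k) = D"
    and c': "coeffs_deg m n lm A (\<lambda>d. d < D) c'"
  defines "c \<equiv> \<lambda>f. if f = k then - (\<Sum>g\<in>A. b g * (g - xmon (lm g))) else c' f + b f * (k - xmon (lm k))"
  shows "coeffs_deg m n lm (insert k A) (\<lambda>d. d < D) c"
  unfolding coeffs_deg_def
proof (intro ballI conjI)
  have clA: "coprime_leads m n A lm" using cl by (rule coprime_leads_subset) auto
  have lead: "\<forall>f\<in>A. leads f (lm f)" using coprime_leadsD(2)[OF clA] by blast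
  have tail_k: "k - xmon (lm k) \<in> polyring m n" using coprime_leadsD(5)[OF cl insertI1] .
  fix f assume "f \<in> insert k A"
  then consider (k) "f = k" | (A) "f \<in> A" "f \<noteq> k" by blast
  note cases = this
  then show "c f \<in> polyring m n"
  proof cases
    case k
    then show ?thesis unfolding c_def using bR coprime_leadsD(5)[OF clA]
      by (auto intro!: polyring_uminus polyring_sum polyring_mult)
  next
    case A
    then show ?thesis unfolding c_def using coeffs_degD(1)[OF c'] bR tail_k
      by (auto intro!: polyring_add polyring_mult)
  qed
  fix \<nu> assume \<nu>: "\<nu> \<in> mons (c f)"
  from cases show "wt \<nu> + wt (lm f) < D"
  proof cases
    case k
    then have "\<nu> \<in> mons (\<Sum>g\<in>A. b g * (g - xmon (lm g)))" using \<nu> by (simp add: c_def mons_uminus)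
    then show ?thesis using mons_sum_mult_tails[OF lead bW] k by simp
  next
    case A
    have "\<forall>\<rho>\<in>mons (b f). wt \<rho> + wt (lm k) + wt (lm f) = D" using bW A by (simp add: ac_simps)
    then have "\<nu> \<in> mons (b f * (k - xmon (lm k))) \<Longrightarrow> wt \<nu> + wt (lm f) < D"
      using mons_mult_tail coprime_leadsD(2)[OF cl insertI1] by blast
    moreover have "\<nu> \<in> mons (c' f) \<or> \<nu> \<in> mons (b f * (k - xmon (lm k)))"
      using \<nu> A keys_add[of "c' f" "b f * (k - xmon (lm k))"] unfolding c_def by auto
    ultimately show ?thesis using coeffs_degD(2)[OF c' A(1)] by blast
  qed
qed

text \<open>Induction on \<open>A\<close>:
  by coprimality the coefficient \<open>a k\<close> of a new element \<open>k\<close> is a combination \<open>\<Sum> b f \<cdot> x\<^bsup>lm f\<^esup>\<close>;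
  subtracting the corresponding Koszul syzygies leaves a syzygy on \<open>A\<close>, and the Koszul syzygies
  lift by \<open>koszul_identity\<close> with corrections of lower weight.\<close>
lemma lift_syzygy:
  fixes a :: "'a::comm_ring_1 mpoly \<Rightarrow> 'a mpoly"
  assumes "coprime_leads m n A lm" "coeffs_deg m n lm A (\<lambda>d. d = D) a"
    and "(\<Sum>f\<in>A. a f * xmon (lm f)) = 0"
  shows "\<exists>c. coeffs_deg m n lm A (\<lambda>d. d < D) c \<and> (\<Sum>f\<in>A. a f * f) = (\<Sum>f\<in>A. c f * f)"
proof -
  have "finite A" using assms(1) unfolding coprime_leads_def by blast
  then show ?thesis using assms
  proof (induction A arbitrary: a rule: finite_induct)
    case empty
    show ?case by (rule exI[of _ "\<lambda>_. 0"]) (simp add: coeffs_deg_def)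
  next
    case (insert k A a)
    define L where "L f = (xmon (lm f) :: 'a mpoly)" for f
    note cl = insert.prems(1) and a_deg = insert.prems(2)
    have clA: "coprime_leads m n A lm" using cl by (rule coprime_leads_subset) auto
    have cop: "\<forall>f\<in>A. vars (lm k) \<inter> vars (lm f) = {}"
      using coprime_leads_insert[OF cl insert.hyps(2)] by blast
    have ak: "a k \<in> polyring m n" "\<forall>\<nu>\<in>mons (a k). wt \<nu> + wt (lm k) = D"
      using coeffs_degD[OF a_deg] by auto
    have syz: "a k * L k + (\<Sum>f\<in>A. a f * L f) = 0"
      using insert.prems(3) insert.hyps unfolding L_def by simp
    then have "a k * xmon (lm k) = (\<Sum>f\<in>A. (- a f) * xmon (lm f))"
      unfolding L_def by (simp add: sum_negf eq_neg_iff_add_eq_0)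
    then obtain b where quot: "\<forall>f\<in>A. \<forall>\<rho>\<in>mons (b f). \<rho> + lm f \<in> mons (a k)"
      and ak_eq: "a k = (\<Sum>f\<in>A. b f * L f)"
      using coprime_quotient[OF insert.hyps(1) cop, of "a k" "\<lambda>f. - a f"] unfolding L_def by blast
    have bW: "\<forall>f\<in>A. \<forall>\<rho>\<in>mons (b f). wt \<rho> + wt (lm f) + wt (lm k) = D"
      using quot ak(2) by (fastforce simp: wt_add)
    have bR: "\<forall>f\<in>A. b f \<in> polyring m n"
      using polyring_quotient[OF ak(1)] quot by blast
    define a' where "a' f = a f + b f * L k" for f
    have a'_deg: "coeffs_deg m n lm A (\<lambda>d. d = D) a'"
      unfolding coeffs_deg_def
    proof (intro ballI conjI)
      fix f assume f: "f \<in> A"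
      show "a' f \<in> polyring m n" unfolding a'_def L_def
        using coeffs_degD(1)[OF a_deg] f bR coprime_leadsD(4)[OF cl insertI1]
        by (intro polyring_add polyring_mult) auto
      fix \<nu> assume "\<nu> \<in> mons (a' f)"
      then have "\<nu> \<in> mons (a f) \<or> \<nu> \<in> mons (b f * xmon (lm k))"
        using keys_add[of "a f" "b f * L k"] unfolding a'_def L_def by blast
      then show "wt \<nu> + wt (lm f) = D"
        using coeffs_degD(2)[OF a_deg] f bW by (auto simp: mons_mult_mono wt_add ac_simps)
    qed
    have "(\<Sum>f\<in>A. a' f * L f) = (\<Sum>f\<in>A. a f * L f) + a k * L k"
      unfolding a'_def ak_eq sum_distrib_right sum.distrib[symmetric]
      by (rule sum.cong) (simp_all add: algebra_simps)
    then have a'_syz: "(\<Sum>f\<in>A. a' f * xmon (lm f)) = 0"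
      using syz unfolding L_def by (simp add: add.commute)
    obtain c' where c': "coeffs_deg m n lm A (\<lambda>d. d < D) c'" "(\<Sum>f\<in>A. a' f * f) = (\<Sum>f\<in>A. c' f * f)"
      using insert.IH[OF clA a'_deg a'_syz] by blast
    define c where "c f = (if f = k then - (\<Sum>g\<in>A. b g * (g - L g)) else c' f + b f * (k - L k))" for f
    have "coeffs_deg m n lm (insert k A) (\<lambda>d. d < D) c"
      unfolding c_def L_def by (rule koszul_correction_deg[OF cl bR bW c'(1)])
    moreover have "(\<Sum>f\<in>insert k A. a f * f) = (\<Sum>f\<in>insert k A. c f * f)"
    proof -
      have a': "(\<Sum>f\<in>A. a' f * f) = (\<Sum>f\<in>A. a f * f) + (\<Sum>f\<in>A. (b f * L k) * f)"
        unfolding a'_def by (simp add: distrib_right sum.distrib)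
      have koszul: "a k * k = (\<Sum>f\<in>A. (b f * L k) * f) + (\<Sum>f\<in>A. (b f * (k - L k)) * f) + c k * k"
        unfolding ak_eq koszul_identity[where b=b and L=L and k=k and Lk="L k"] c_def by simp
      have "(\<Sum>f\<in>A. c f * f) = (\<Sum>f\<in>A. c' f * f + (b f * (k - L k)) * f)"
        using insert.hyps(2) by (intro sum.cong) (auto simp: c_def distrib_right)
      then have c: "(\<Sum>f\<in>A. c f * f) = (\<Sum>f\<in>A. a' f * f) + (\<Sum>f\<in>A. (b f * (k - L k)) * f)"
        unfolding c'(2) by (simp add: sum.distrib)
      have "(\<Sum>f\<in>insert k A. a f * f) = a k * k + (\<Sum>f\<in>A. a f * f)"
        using insert.hyps by simp
      also have "\<dots> = (\<Sum>f\<in>A. c f * f) + c k * k"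
        unfolding koszul c a' by (simp add: ac_simps)
      also have "\<dots> = (\<Sum>f\<in>insert k A. c f * f)"
        using insert.hyps by simp
      finally show ?thesis .
    qed
    ultimately show ?case by blast
  qed
qed

text \<open>A combination of weight \<open>\<le> D\<close> whose value has weight \<open>< D\<close> can be rewritten with weight \<open>< D\<close>:
  the top parts of the coefficients form a syzygy of the leading monomials, which lifts.\<close>
lemma lower_rep_weight:
  fixes c :: "'a::comm_ring_1 mpoly \<Rightarrow> 'a mpoly"
  assumes cl: "coprime_leads m n A lm" and c: "coeffs_deg m n lm A (\<lambda>d. d \<le> D) c"
    and low: "\<forall>\<nu>\<in>mons (\<Sum>f\<in>A. c f * f). wt \<nu> < D"
  shows "\<exists>c'. coeffs_deg m n lm A (\<lambda>d. d < D) c' \<and> (\<Sum>f\<in>A. c f * f) = (\<Sum>f\<in>A. c' f * f)"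
proof -
  define a where "a f = mpart (\<lambda>\<nu>. wt \<nu> + wt (lm f) = D) (c f)" for f
  define r where "r f = mpart (\<lambda>\<nu>. wt \<nu> + wt (lm f) \<noteq> D) (c f)" for f
  have "(\<Sum>f\<in>A. a f * xmon (lm f)) = mpart (\<lambda>\<nu>. wt \<nu> = D) (\<Sum>f\<in>A. c f * f)"
    unfolding a_def using top_part_comb[OF cl c] by simp
  also have "\<dots> = 0" by (rule mpart_none) (use low in auto)
  finally have syz: "(\<Sum>f\<in>A. a f * xmon (lm f)) = 0" .
  have a_deg: "coeffs_deg m n lm A (\<lambda>d. d = D) a"
    using c unfolding coeffs_deg_def a_def by (auto intro: polyring_mpart simp: mons_mpart)
  obtain c'' where c'': "coeffs_deg m n lm A (\<lambda>d. d < D) c''" "(\<Sum>f\<in>A. a f * f) = (\<Sum>f\<in>A. c'' f * f)"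
    using lift_syzygy[OF cl a_deg syz] by blast
  have r_deg: "coeffs_deg m n lm A (\<lambda>d. d < D) r"
    using c unfolding coeffs_deg_def r_def by (fastforce intro: polyring_mpart simp: mons_mpart)
  have "(\<Sum>f\<in>A. c f * f) = (\<Sum>f\<in>A. a f * f) + (\<Sum>f\<in>A. r f * f)"
    unfolding a_def r_def sum.distrib[symmetric] distrib_right[symmetric] mpart_split[symmetric] ..
  also have "\<dots> = (\<Sum>f\<in>A. (c'' f + r f) * f)"
    unfolding c''(2) by (simp add: sum.distrib distrib_right)
  finally have rep: "(\<Sum>f\<in>A. c f * f) = (\<Sum>f\<in>A. (c'' f + r f) * f)" .
  have "coeffs_deg m n lm A (\<lambda>d. d < D) (\<lambda>f. c'' f + r f)"
    unfolding coeffs_deg_def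
  proof (intro ballI conjI)
    fix f assume f: "f \<in> A"
    show "c'' f + r f \<in> polyring m n"
      using coeffs_degD(1)[OF c''(1) f] coeffs_degD(1)[OF r_deg f] by (rule polyring_add)
    fix \<nu> assume "\<nu> \<in> mons (c'' f + r f)"
    then have "\<nu> \<in> mons (c'' f) \<or> \<nu> \<in> mons (r f)" using keys_add[of "c'' f" "r f"] by blast
    then show "wt \<nu> + wt (lm f) < D" using coeffs_degD(2)[OF c''(1) f] coeffs_degD(2)[OF r_deg f] by blast
  qed
  then show ?thesis using rep by blast
qed

text \<open>Standard representations: every element of the ideal of weight \<open>\<le> E\<close> is a combination
  of weight \<open>\<le> E\<close> (start from any representation and lower its weight step by step).\<close>
lemma standard_rep:
  fixes h :: "'a::comm_ring_1 mpoly"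
  assumes cl: "coprime_leads m n A lm" and h: "h \<in> gen_ideal m n A" and low: "\<forall>\<nu>\<in>mons h. wt \<nu> \<le> E"
  shows "\<exists>c. coeffs_deg m n lm A (\<lambda>d. d \<le> E) c \<and> h = (\<Sum>f\<in>A. c f * f)"
proof -
  have descend: "(\<exists>c. coeffs_deg m n lm A (\<lambda>d. d \<le> E + k) c \<and> h = (\<Sum>f\<in>A. c f * f)) \<Longrightarrow>
      \<exists>c. coeffs_deg m n lm A (\<lambda>d. d \<le> E) c \<and> h = (\<Sum>f\<in>A. c f * f)" for k
  proof (induction k)
    case (Suc k)
    then obtain c where c: "coeffs_deg m n lm A (\<lambda>d. d \<le> E + Suc k) c" "h = (\<Sum>f\<in>A. c f * f)"
      by blast
    have "\<forall>\<nu>\<in>mons (\<Sum>f\<in>A. c f * f). wt \<nu> < E + Suc k"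
      using low unfolding c(2) by fastforce
    from lower_rep_weight[OF cl c(1) this] obtain c'
      where c': "coeffs_deg m n lm A (\<lambda>d. d < E + Suc k) c'" "(\<Sum>f\<in>A. c f * f) = (\<Sum>f\<in>A. c' f * f)"
      by blast
    have "coeffs_deg m n lm A (\<lambda>d. d \<le> E + k) c'"
      using c'(1) by (rule coeffs_deg_mono) simp
    then show ?case using Suc.IH c(2) c'(2) by blast
  qed simp
  obtain c0 where c0: "\<forall>f\<in>A. c0 f \<in> polyring m n" "h = (\<Sum>f\<in>A. c0 f * f)"
    using h unfolding ideal_gen_def by blast
  have fin: "finite A" using cl unfolding coprime_leads_def by blast
  define K where "K = (\<Sum>f\<in>A. \<Sum>\<nu>\<in>mons (c0 f). wt \<nu> + wt (lm f))"
  have "wt \<nu> + wt (lm f) \<le> E + K" if "f \<in> A" "\<nu> \<in> mons (c0 f)" for f \<nu>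
  proof -
    have "wt \<nu> + wt (lm f) \<le> (\<Sum>\<nu>\<in>mons (c0 f). wt \<nu> + wt (lm f))"
      using that(2) by (intro member_le_sum) auto
    also have "\<dots> \<le> K" unfolding K_def using that(1) fin by (intro member_le_sum) auto
    finally show ?thesis by simp
  qed
  then have "coeffs_deg m n lm A (\<lambda>d. d \<le> E + K) c0"
    using c0(1) unfolding coeffs_deg_def by blast
  then show ?thesis using descend c0(2) by blast
qed

text \<open>Reduction of the top part: if \<open>g \<cdot> k\<close> lies in the ideal of \<open>A\<close> and \<open>lm k\<close> is coprime to all
  \<open>lm f\<close>, the weight-\<open>d\<close> part of \<open>g\<close> is a combination of the \<open>x\<^bsup>lm f\<^esup>\<close>, so subtracting the
  corresponding combination of the \<open>f\<close> lowers the weight of \<open>g\<close>.\<close>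
lemma reduce_top_weight:
  fixes g k :: "'a::comm_ring_1 mpoly"
  assumes cl: "coprime_leads m n (insert k A) lm" and k: "k \<notin> A"
    and g: "g \<in> polyring m n" "g * k \<in> gen_ideal m n A" "\<forall>\<nu>\<in>mons g. wt \<nu> \<le> d"
  shows "\<exists>q\<in>gen_ideal m n A. \<forall>\<nu>\<in>mons (g - q). wt \<nu> < d"
proof -
  have clA: "coprime_leads m n A lm" using cl by (rule coprime_leads_subset) auto
  have fin: "finite A" using clA unfolding coprime_leads_def by blast
  have lead: "\<forall>f\<in>A. leads f (lm f)" using coprime_leadsD(2)[OF clA] by blast
  have lead_k: "leads k (lm k)" using coprime_leadsD(2)[OF cl insertI1] .
  define E where "E = d + wt (lm k)"
  define top where "top = mpart (\<lambda>\<nu>. wt \<nu> = d) g"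
  have "\<forall>\<nu>\<in>mons (g * k). wt \<nu> \<le> E"
  proof
    fix \<nu> assume "\<nu> \<in> mons (g * k)"
    then show "wt \<nu> \<le> E"
      by (rule mons_mult_bound[rotated])
        (use g(3) leads_mons_le[OF lead_k] in \<open>fastforce simp: E_def wt_add intro: add_mono\<close>)
  qed
  then obtain c where c: "coeffs_deg m n lm A (\<lambda>d. d \<le> E) c" "g * k = (\<Sum>f\<in>A. c f * f)"
    using standard_rep[OF clA g(2)] by blast
  have "top * xmon (lm k) = mpart (\<lambda>\<nu>. wt \<nu> = E) (g * k)"
    unfolding top_def E_def using top_part_mult_lead[OF lead_k] g(3) by simp
  also have "\<dots> = (\<Sum>f\<in>A. mpart (\<lambda>\<nu>. wt \<nu> + wt (lm f) = E) (c f) * xmon (lm f))"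
    unfolding c(2) by (rule top_part_comb[OF clA c(1)])
  finally have top_syz: "top * xmon (lm k) = (\<Sum>f\<in>A. mpart (\<lambda>\<nu>. wt \<nu> + wt (lm f) = E) (c f) * xmon (lm f))" .
  have cop: "\<forall>f\<in>A. vars (lm k) \<inter> vars (lm f) = {}" using coprime_leads_insert[OF cl k] by blast
  obtain b where quot: "\<forall>f\<in>A. \<forall>\<rho>\<in>mons (b f). \<rho> + lm f \<in> mons top"
    and top: "top = (\<Sum>f\<in>A. b f * xmon (lm f))"
    using coprime_quotient[OF fin cop top_syz] by blast
  have bR: "b f \<in> polyring m n" if "f \<in> A" for f
    using polyring_quotient[OF polyring_mpart[OF g(1)]] quot that unfolding top_def by blast
  have bW: "\<forall>f\<in>A. \<forall>\<rho>\<in>mons (b f). wt \<rho> + wt (lm f) + 0 = d"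
    using quot unfolding top_def by (fastforce simp: mons_mpart wt_add)
  define q where "q = (\<Sum>f\<in>A. b f * f)"
  have "q \<in> gen_ideal m n A" unfolding q_def using bR by (rule gen_ideal_comb)
  moreover have "\<forall>\<nu>\<in>mons (g - q). wt \<nu> < d"
  proof
    have "q = top + (\<Sum>f\<in>A. b f * (f - xmon (lm f)))"
      unfolding q_def top by (simp add: algebra_simps sum.distrib[symmetric])
    then have "g - q = mpart (\<lambda>\<nu>. wt \<nu> \<noteq> d) g - (\<Sum>f\<in>A. b f * (f - xmon (lm f)))"
      using mpart_split[of g "\<lambda>\<nu>. wt \<nu> = d"] unfolding top_def by (simp add: algebra_simps)
    moreover fix \<nu> assume "\<nu> \<in> mons (g - q)"
    ultimately have "\<nu> \<in> mons (mpart (\<lambda>\<nu>. wt \<nu> \<noteq> d) g) \<union> mons (\<Sum>f\<in>A. b f * (f - xmon (lm f)))"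
      using mons_diff[of "mpart (\<lambda>\<nu>. wt \<nu> \<noteq> d) g" "\<Sum>f\<in>A. b f * (f - xmon (lm f))"] by auto
    then show "wt \<nu> < d"
      using g(3) mons_sum_mult_tails[OF lead bW] by (fastforce simp: mons_mpart)
  qed
  ultimately show ?thesis by blast
qed

lemma lead_nonzerodivisor:
  fixes g k :: "'a::comm_ring_1 mpoly"
  assumes cl: "coprime_leads m n (insert k A) lm" and k: "k \<notin> A"
    and g: "g \<in> polyring m n" "g * k \<in> gen_ideal m n A"
  shows "g \<in> gen_ideal m n A"
proof -
  have clA: "coprime_leads m n A lm" using cl by (rule coprime_leads_subset) auto
  have AR: "A \<subseteq> polyring m n" using coprime_leadsD(1)[OF clA] by blast
  have kR: "k \<in> polyring m n" using coprime_leadsD(1)[OF cl insertI1] .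
  have "\<forall>g. g \<in> polyring m n \<and> g * k \<in> gen_ideal m n A \<and> (\<forall>\<nu>\<in>mons g. wt \<nu> < d) \<longrightarrow> g \<in> gen_ideal m n A"
    for d
  proof (induction d)
    case 0
    then show ?case by (auto simp: gen_ideal_zero)
  next
    case (Suc d)
    show ?case
    proof (intro allI impI)
      fix g assume "g \<in> polyring m n \<and> g * k \<in> gen_ideal m n A \<and> (\<forall>\<nu>\<in>mons g. wt \<nu> < Suc d)"
      then have g: "g \<in> polyring m n" "g * k \<in> gen_ideal m n A" "\<forall>\<nu>\<in>mons g. wt \<nu> \<le> d"
        by auto
      obtain q where q: "q \<in> gen_ideal m n A" "\<forall>\<nu>\<in>mons (g - q). wt \<nu> < d"
        using reduce_top_weight[OF cl k g] by blast
      have qR: "q \<in> polyring m n" using gen_ideal_subset[OF AR] q(1) by blast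
      have "(g - q) * k = g * k - k * q" by (simp add: algebra_simps)
      then have "(g - q) * k \<in> gen_ideal m n A"
        using g(2) gen_ideal_mult[OF kR q(1)] by (simp add: gen_ideal_diff)
      then have "g - q \<in> gen_ideal m n A"
        using Suc.IH polyring_diff[OF g(1) qR] q(2) by blast
      then show "g \<in> gen_ideal m n A" using gen_ideal_add[OF _ q(1)] by fastforce
    qed
  qed
  moreover have "\<forall>\<nu>\<in>mons g. wt \<nu> < Suc (\<Sum>\<nu>\<in>mons g. wt \<nu>)"
    by (simp add: le_imp_less_Suc member_le_sum)
  ultimately show ?thesis using g by blast
qed

lemma not_in_take: "distinct xs \<Longrightarrow> i < length xs \<Longrightarrow> xs ! i \<notin> set (take i xs)"
  by (metis distinct_take id_take_nth_drop not_distinct_conv_prefix)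

theorem coprime_leads_regular_sequence:
  fixes fs :: "'a::comm_ring_1 mpoly list"
  assumes cl: "coprime_leads m n (set fs) lm" and dist: "distinct fs"
  shows "regular_sequence (polyring m n) fs"
  unfolding regular_sequence_def
proof (intro conjI allI impI ballI)
  show "set fs \<subseteq> polyring m n" using coprime_leadsD(1)[OF cl] by blast
  show "gen_ideal m n (set fs) \<noteq> polyring m n"
  proof
    assume "gen_ideal m n (set fs) = polyring m n"
    then have "1 \<in> gen_ideal m n (set fs)" by (simp add: polyring_iff)
    from standard_rep[OF cl this, of 0] obtain c
      where c: "coeffs_deg m n lm (set fs) (\<lambda>d. d \<le> 0) c" "1 = (\<Sum>f\<in>set fs. c f * f)"
      by auto
    have "c f = 0" if "f \<in> set fs" for f
      using coeffs_degD(2)[OF c(1) that] coprime_leadsD(3)[OF cl that] by fastforce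
    then show False using c(2) by simp
  qed
  fix i g
  assume i: "i < length fs" and g: "g \<in> polyring m n" "g * fs ! i \<in> gen_ideal m n (set (take i fs))"
  have "coprime_leads m n (insert (fs ! i) (set (take i fs))) lm"
    using cl by (rule coprime_leads_subset) (use i in \<open>auto dest: in_set_takeD\<close>)
  then show "g \<in> gen_ideal m n (set (take i fs))"
    using not_in_take[OF dist i] g by (rule lead_nonzerodivisor)
qed

text \<open>For a strictly increasing sequence \<open>a\<close> and a permutation
  \<open>\<sigma> \<noteq> id\<close> of \<open>{0..<m}\<close>, \<open>\<Sum>i<m. (i+1) a (\<sigma> i) < \<Sum>i<m. (i+1) a i\<close>. Writing the weighted sum as
  the sum of the tail sums over \<open>{k..<m}\<close>, it suffices that the image of each tail is a subset of
  \<open>{0..<m}\<close> of the same size, whose sum is at most that of the tail itself, strictly unless \<open>\<sigma>\<close>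
  maps the tail onto itself.\<close>
lemma weighted_sum_as_tail_sums: "(\<Sum>i<m. Suc i * y i) = (\<Sum>k<m. \<Sum>i\<in>{k..<m}. (y i :: nat))"
proof (induction m)
  case 0 then show ?case by simp
next
  case (Suc m)
  have "(\<Sum>k<Suc m. \<Sum>i\<in>{k..<Suc m}. y i) = (\<Sum>k<Suc m. (\<Sum>i\<in>{k..<m}. y i) + y m)"
    by (rule sum.cong) auto
  also have "\<dots> = (\<Sum>k<Suc m. \<Sum>i\<in>{k..<m}. y i) + Suc m * y m" by (simp add: sum.distrib)
  also have "(\<Sum>k<Suc m. \<Sum>i\<in>{k..<m}. y i) = (\<Sum>k<m. \<Sum>i\<in>{k..<m}. y i)" by simp
  finally show ?case using Suc by simp
qed

lemma sum_less_dominating: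
  fixes f :: "nat \<Rightarrow> nat"
  assumes "finite X" "finite Y" "card X = card Y" "X \<noteq> {}" "\<forall>x\<in>X. \<forall>y\<in>Y. f x < f y"
  shows "sum f X < sum f Y"
proof -
  have Yne: "Y \<noteq> {}" using assms by auto
  define M where "M = Max (f ` X)"
  have MX: "\<forall>x\<in>X. f x \<le> M" unfolding M_def using assms(1) by auto
  have "M \<in> f ` X" unfolding M_def using assms(1,4) by (intro Max_in) auto
  then obtain x0 where "x0 \<in> X" "M = f x0" by blast
  then have MY: "\<forall>y\<in>Y. M < f y" using assms(5) by blast
  have "sum f X \<le> card X * M" using sum_bounded_above[of X f M] MX by simp
  also have "\<dots> < card Y * Suc M" using assms(3,4,1,2) Yne by (simp add: card_gt_0_iff)
  also have "\<dots> \<le> sum f Y" using sum_bounded_below[of Y "Suc M" f] MY by (simp add: Suc_le_eq)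
  finally show ?thesis .
qed

lemma subset_sum_le_top:
  fixes a :: "nat \<Rightarrow> nat"
  assumes mono: "\<And>i j. i < j \<Longrightarrow> j < m \<Longrightarrow> a i < a j"
    and S: "S \<subseteq> {0..<m}" "card S = m - k" and k: "k \<le> m"
  shows "sum a S \<le> sum a {k..<m}" "S \<noteq> {k..<m} \<Longrightarrow> sum a S < sum a {k..<m}"
proof -
  define X where "X = S - {k..<m}"
  define Y where "Y = {k..<m} - S"
  define C where "C = S \<inter> {k..<m}"
  have fS: "finite S" using S(1) by (rule finite_subset) simp
  have fin: "finite S" "finite X" "finite Y" "finite C" unfolding X_def Y_def C_def using fS by auto
  have S1: "S = C \<union> X" "C \<inter> X = {}" unfolding X_def C_def by auto
  have S2: "{k..<m} = C \<union> Y" "C \<inter> Y = {}" unfolding Y_def C_def by auto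
  have "card S = card C + card X" using S1 fin by (simp add: card_Un_disjoint)
  moreover have "m - k = card C + card Y" using S2 fin by (metis card_Un_disjoint card_atLeastLessThan)
  ultimately have cXY: "card X = card Y" using S(2) by simp
  have lt: "\<forall>x\<in>X. \<forall>y\<in>Y. a x < a y"
  proof (intro ballI)
    fix x y assume "x \<in> X" "y \<in> Y"
    then have "x < k" "k \<le> y" "y < m" using S unfolding X_def Y_def by auto
    then show "a x < a y" using mono by simp
  qed
  have eqs: "sum a S = sum a C + sum a X" "sum a {k..<m} = sum a C + sum a Y"
    using S1 S2 fin by (simp_all add: sum.union_disjoint)
  have "sum a X \<le> sum a Y"
  proof (cases "X = {}")
    case True then show ?thesis using cXY fin by simp
  next
    case False then show ?thesis using sum_less_dominating[OF fin(2,3) cXY False lt] by simp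
  qed
  then show "sum a S \<le> sum a {k..<m}" using eqs by simp
  assume ne: "S \<noteq> {k..<m}"
  have "X \<noteq> {}"
  proof
    assume "X = {}"
    then have "S \<subseteq> {k..<m}" unfolding X_def by auto
    moreover have "card S = card {k..<m}" using S(2) by simp
    ultimately have "S = {k..<m}" using card_subset_eq by blast
    then show False using ne by simp
  qed
  then show "sum a S < sum a {k..<m}" using sum_less_dominating[OF fin(2,3) cXY _ lt] eqs by simp
qed

lemma permutation_fixing_tails:
  fixes m :: nat
  assumes p: "\<sigma> permutes {0..<m}" and t: "\<forall>k<m. \<sigma> ` {k..<m} = {k..<m}"
  shows "\<sigma> = id"
proof
  fix i show "\<sigma> i = id i"
  proof (cases "i < m")
    case False then show ?thesis using p by (simp add: permutes_not_in)
  next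
    case True
    have e: "\<sigma> ` {i..<m} = {i..<m}" using t True by simp
    have "\<sigma> i \<in> \<sigma> ` {i..<m}" using True by (intro imageI) simp
    then have si: "\<sigma> i \<in> {i..<m}" by (simp only: e)
    have "\<not> \<sigma> i > i"
    proof
      assume gt: "\<sigma> i > i"
      then have sm: "Suc i < m" using si by simp
      then have e2: "\<sigma> ` {Suc i..<m} = {Suc i..<m}" using t by simp
      have "\<sigma> i \<in> {Suc i..<m}" using gt si by simp
      then have "\<sigma> i \<in> \<sigma> ` {Suc i..<m}" by (simp only: e2)
      then obtain j where j: "j \<in> {Suc i..<m}" "\<sigma> i = \<sigma> j" by (rule imageE) simp
      then have "j = i" using permutes_inj[OF p] by (simp add: inj_eq)
      then show False using j(1) by simp
    qed
    then show ?thesis using si by simp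
  qed
qed

lemma rearrangement_strict:
  fixes a :: "nat \<Rightarrow> nat"
  assumes mono: "\<And>i j. i < j \<Longrightarrow> j < m \<Longrightarrow> a i < a j"
    and p: "\<sigma> permutes {0..<m}" and ne: "\<sigma> \<noteq> id"
  shows "(\<Sum>i<m. Suc i * a (\<sigma> i)) < (\<Sum>i<m. Suc i * a i)"
proof -
  have inj: "inj \<sigma>" using permutes_inj[OF p] .
  have eq: "(\<Sum>i\<in>{k..<m}. a (\<sigma> i)) = sum a (\<sigma> ` {k..<m})" for k
    using inj by (simp add: sum.reindex inj_on_subset[OF inj])
  have sub: "\<sigma> ` {k..<m} \<subseteq> {0..<m}" for k
    using p by (metis atLeastLessThan_iff ivl_subset le0 order_refl permutes_image image_mono)
  have card: "card (\<sigma> ` {k..<m}) = m - k" for k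
    using inj by (simp add: card_image inj_on_subset[OF inj])
  have le: "(\<Sum>i\<in>{k..<m}. a (\<sigma> i)) \<le> (\<Sum>i\<in>{k..<m}. a i)" if "k < m" for k
    unfolding eq using subset_sum_le_top(1)[OF mono sub card] that by simp
  obtain k where k: "k < m" "\<sigma> ` {k..<m} \<noteq> {k..<m}" using permutation_fixing_tails[OF p] ne by blast
  have lt: "(\<Sum>i\<in>{k..<m}. a (\<sigma> i)) < (\<Sum>i\<in>{k..<m}. a i)"
    unfolding eq using subset_sum_le_top(2)[OF mono sub card] k by simp
  have "(\<Sum>k<m. \<Sum>i\<in>{k..<m}. a (\<sigma> i)) < (\<Sum>k<m. \<Sum>i\<in>{k..<m}. a i)"
  proof (rule sum_strict_mono_ex1)
    show "\<forall>x\<in>{..<m}. (\<Sum>i\<in>{x..<m}. a (\<sigma> i)) \<le> (\<Sum>i\<in>{x..<m}. a i)" using le by simp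
    show "\<exists>x\<in>{..<m}. (\<Sum>i\<in>{x..<m}. a (\<sigma> i)) < (\<Sum>i\<in>{x..<m}. a i)" using lt k by blast
  qed simp
  then show ?thesis by (simp only: weighted_sum_as_tail_sums)
qed

definition perm_mon :: "nat \<Rightarrow> nat set \<Rightarrow> (nat \<Rightarrow> nat) \<Rightarrow> mon" where
  "perm_mon m F \<sigma> = (\<Sum>i<m. Poly_Mapping.single (Suc i, sorted_list_of_set F ! \<sigma> i) 1)"

definition diag_mon :: "nat \<Rightarrow> nat set \<Rightarrow> mon" where
  "diag_mon m F = perm_mon m F id"

lemma wt_perm_mon: "wt (perm_mon m F \<sigma>) = (\<Sum>i<m. Suc i * (sorted_list_of_set F ! \<sigma> i))"
  by (simp add: perm_mon_def wt_sum wt_single)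

lemma prod_xvar: "(\<Prod>i<m. (xvar (Suc i) (c i) :: 'a::comm_ring_1 mpoly)) =
   xmon (\<Sum>i<m. Poly_Mapping.single (Suc i, c i) 1)"
  by (induction m) (simp_all add: xvar_def mult_single)

lemma of_int_mult_xmon: "(of_int k :: 'a::comm_ring_1 mpoly) * xmon \<nu> = Poly_Mapping.single \<nu> (of_int k)"
proof -
  have "(of_int k :: 'a mpoly) * xmon \<nu> = Poly_Mapping.single 0 (of_int k) * xmon \<nu>"
    by (simp only: single_of_int)
  also have "\<dots> = Poly_Mapping.single \<nu> (of_int k)" by (simp del: single_of_int add: mult_single)
  finally show ?thesis .
qed

lemma maxminor_expansion: "(maxminor m F :: 'a::comm_ring_1 mpoly) =
   (\<Sum>\<sigma>\<in>{\<sigma>. \<sigma> permutes {0..<m}}. Poly_Mapping.single (perm_mon m F \<sigma>) (of_int (sign \<sigma>)))"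
  unfolding maxminor_def Let_def prod_xvar perm_mon_def of_int_mult_xmon ..

lemma sorted_list_of_set_strict_mono:
  assumes "finite F" "card F = m" "i < j" "j < m"
  shows "sorted_list_of_set F ! i < sorted_list_of_set F ! j"
  using sorted_wrt_nth_less[OF strict_sorted_list_of_set[of F]] assms
  by (simp add: length_sorted_list_of_set)

lemma sorted_list_of_set_nth_mem:
  assumes "finite F" "card F = m" "i < m"
  shows "sorted_list_of_set F ! i \<in> F"
  using assms nth_mem[of i "sorted_list_of_set F"] by simp

text \<open>By the rearrangement inequality, the diagonal is the unique heaviest monomial of a maximal
  minor, with coefficient \<open>sign id = 1\<close>.\<close>
lemma maxminor_leads:
  assumes fin: "finite F" and card: "card F = m"
  shows "leads (maxminor m F :: 'a::comm_ring_1 mpoly) (diag_mon m F)"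
proof -
  define P where "P = {\<sigma>. \<sigma> permutes {0..<m}}"
  have finP: "finite P" unfolding P_def by (rule finite_permutations) simp
  have idP: "id \<in> P" unfolding P_def by simp
  have "(maxminor m F :: 'a mpoly) - xmon (diag_mon m F) =
      (\<Sum>\<sigma>\<in>P - {id}. Poly_Mapping.single (perm_mon m F \<sigma>) (of_int (sign \<sigma>)))"
    unfolding maxminor_expansion P_def[symmetric] sum.remove[OF finP idP] diag_mon_def by simp
  then show ?thesis unfolding leads_def
  proof (intro ballI)
    fix \<nu> assume "(maxminor m F :: 'a mpoly) - xmon (diag_mon m F) =
      (\<Sum>\<sigma>\<in>P - {id}. Poly_Mapping.single (perm_mon m F \<sigma>) (of_int (sign \<sigma>)))"
      and "\<nu> \<in> mons ((maxminor m F :: 'a mpoly) - xmon (diag_mon m F))"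
    then have "\<nu> \<in> mons (\<Sum>\<sigma>\<in>P - {id}. Poly_Mapping.single (perm_mon m F \<sigma>) (of_int (sign \<sigma>) :: 'a))"
      by simp
    then obtain \<sigma> where \<sigma>: "\<sigma> \<in> P - {id}" "\<nu> = perm_mon m F \<sigma>"
      using subsetD[OF keys_sum] by (fastforce split: if_splits)
    have "(\<Sum>i<m. Suc i * (sorted_list_of_set F ! \<sigma> i)) < (\<Sum>i<m. Suc i * (sorted_list_of_set F ! i))"
      using \<sigma>(1) sorted_list_of_set_strict_mono[OF fin card] unfolding P_def
      by (intro rearrangement_strict) auto
    then show "wt \<nu> < wt (diag_mon m F)" unfolding \<sigma>(2) diag_mon_def wt_perm_mon by simp
  qed
qed

lemma vars_diag_mon: "vars (diag_mon m F) = (\<lambda>i. (Suc i, sorted_list_of_set F ! i)) ` {..<m}"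
proof -
  have "vars (sum f S) = (\<Union>i\<in>S. vars (f i))" if "finite S" for f :: "nat \<Rightarrow> mon" and S
    using that by (induction S rule: finite_induct) (simp_all add: vars_add)
  then show ?thesis unfolding diag_mon_def perm_mon_def by auto
qed

lemma wt_diag_mon_pos:
  assumes "finite F" "card F = m" "F \<subseteq> {1..n}" "0 < m"
  shows "0 < wt (diag_mon m F)"
proof -
  have "sorted_list_of_set F ! 0 \<in> F" using sorted_list_of_set_nth_mem assms by blast
  then have "0 < sorted_list_of_set F ! 0" using assms(3) by auto
  moreover have "Suc 0 * (sorted_list_of_set F ! 0) \<le> (\<Sum>i<m. Suc i * (sorted_list_of_set F ! i))"
    using assms(4) by (intro member_le_sum[of 0 "{..<m}" "\<lambda>i. Suc i * (sorted_list_of_set F ! i)"]) auto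
  ultimately show ?thesis unfolding diag_mon_def wt_perm_mon by simp
qed

lemma maxminor_polyring:
  assumes "finite F" "card F = m" "F \<subseteq> {1..n}"
  shows "(maxminor m F :: 'a::comm_ring_1 mpoly) \<in> polyring m n"
  unfolding maxminor_expansion
proof (rule polyring_sum, rule polyring_single)
  fix \<sigma> assume "\<sigma> \<in> {\<sigma>. \<sigma> permutes {0..<m}}"
  then have \<sigma>: "\<sigma> i < m" if "i < m" for i
    using permutes_in_image that by fastforce
  have "vars (perm_mon m F \<sigma>) \<subseteq> (\<Union>i<m. vars (Poly_Mapping.single (Suc i, sorted_list_of_set F ! \<sigma> i) (1::nat)))"
    unfolding perm_mon_def by (rule keys_sum)
  then show "vars (perm_mon m F \<sigma>) \<subseteq> {1..m} \<times> {1..n}"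
    using sorted_list_of_set_nth_mem[OF assms(1,2) \<sigma>] assms(3) by auto
qed

lemma facetD:
  assumes "pure_complex m n Fs" "F \<in> Fs"
  shows "finite F" "F \<subseteq> {1..n}" "card F = m"
proof -
  show "F \<subseteq> {1..n}" "card F = m" using assms unfolding pure_complex_def by auto
  then show "finite F" using finite_subset by blast
qed

lemma finite_facets: "pure_complex m n Fs \<Longrightarrow> finite Fs"
  by (rule finite_subset[of Fs "Pow {1..n}"]) (use facetD(2) in blast)+

lemma facet_clique_simplex: "pure_complex m n Fs \<Longrightarrow> F \<in> Fs \<Longrightarrow> F \<in> clique_simplices m n Fs"
  unfolding clique_simplices_def using facetD[of m n Fs F] by (auto dest: card_subset_eq[rotated])

lemma finite_clique_simplices: "finite (clique_simplices m n Fs)"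
  by (rule finite_subset[of _ "Pow {1..n}"]) (auto simp: clique_simplices_def)

lemma clique_subset: "V \<in> cliques m n Fs \<Longrightarrow> V \<subseteq> {1..n}"
  unfolding cliques_def clique_simplices_def by blast

lemma clique_above:
  assumes "X \<in> clique_simplices m n Fs"
  shows "\<exists>Y\<in>cliques m n Fs. X \<subseteq> Y"
proof -
  obtain Y where "Y \<in> clique_simplices m n Fs" "X \<subseteq> Y"
    "\<forall>b\<in>clique_simplices m n Fs. Y \<subseteq> b \<longrightarrow> Y = b"
    using finite_has_maximal2[OF finite_clique_simplices assms] by blast
  then show ?thesis unfolding cliques_def by auto
qed

lemma cliques_eq_facets:
  assumes pc: "pure_complex m n Fs" and cs: "cliques_simplices m n Fs"
  shows "cliques m n Fs = Fs"
proof
  show "cliques m n Fs \<subseteq> Fs"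
    using cs unfolding cliques_simplices_def cliques_def clique_simplices_def by blast
  show "Fs \<subseteq> cliques m n Fs"
  proof
    fix F assume F: "F \<in> Fs"
    obtain Y where Y: "Y \<in> cliques m n Fs" "F \<subseteq> Y"
      using clique_above[OF facet_clique_simplex[OF pc F]] by blast
    have "finite Y" "card Y = m"
      using clique_subset[OF Y(1)] cs Y(1) unfolding cliques_simplices_def by (auto intro: finite_subset)
    then have "F = Y" using Y(2) facetD[OF pc F] card_subset_eq[of Y F] by simp
    then show "F \<in> cliques m n Fs" using Y(1) by simp
  qed
qed

text \<open>For \<open>m \<ge> 3\<close>, if distinct facets share at most one vertex, no simplex with more than \<open>m\<close>
  vertices has its \<open>(m-1)\<close>-skeleton in \<open>\<Delta>\<close> (two of its facets would share \<open>m - 1 \<ge> 2\<close> vertices);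
  hence the cliques are the facets, each a single simplex.\<close>
lemma cliques_of_sparse_facets:
  assumes pc: "pure_complex m n Fs" and m3: "3 \<le> m"
    and sparse: "\<And>F G. F \<in> Fs \<Longrightarrow> G \<in> Fs \<Longrightarrow> F \<noteq> G \<Longrightarrow> card (F \<inter> G) \<le> 1"
  shows "cliques m n Fs = Fs" "cliques_simplices m n Fs"
proof -
  have cs_eq: "clique_simplices m n Fs = Fs"
  proof
    show "clique_simplices m n Fs \<subseteq> Fs"
    proof
      fix \<Gamma> assume "\<Gamma> \<in> clique_simplices m n Fs"
      then have \<Gamma>: "m \<le> card \<Gamma>" "\<forall>A. A \<subseteq> \<Gamma> \<and> card A = m \<longrightarrow> A \<in> Fs"
        unfolding clique_simplices_def by auto
      have "\<not> m < card \<Gamma>"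
      proof
        assume "m < card \<Gamma>"
        then obtain B where B: "B \<subseteq> \<Gamma>" "card B = Suc m" "finite B"
          using obtain_subset_with_card_n[of "Suc m" \<Gamma>] by auto
        obtain a where a: "a \<in> B" using B(2) by fastforce
        have "card (B - {a}) = m" using B a by simp
        then obtain b where b: "b \<in> B - {a}" using m3 by (metis card.empty ex_in_conv not_numeral_le_zero)
        have ab: "a \<in> B" "b \<in> B" "a \<noteq> b" using a b by auto
        have "card (B - {b}) = m" using B ab by simp
        then have "B - {a} \<in> Fs" "B - {b} \<in> Fs" using \<Gamma>(2) B \<open>card (B - {a}) = m\<close> by blast+
        moreover have "B - {a} \<noteq> B - {b}" using ab by auto
        ultimately have "card ((B - {a}) \<inter> (B - {b})) \<le> 1" by (rule sparse)
        moreover have "(B - {a}) \<inter> (B - {b}) = B - {a} - {b}" by auto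
        then have "card ((B - {a}) \<inter> (B - {b})) = m - 1" using B ab by simp
        ultimately show False using m3 by simp
      qed
      then show "\<Gamma> \<in> Fs" using \<Gamma> by simp
    qed
    show "Fs \<subseteq> clique_simplices m n Fs" using facet_clique_simplex[OF pc] by blast
  qed
  have "\<not> F \<subset> G" if "F \<in> Fs" "G \<in> Fs" for F G
  proof
    assume "F \<subset> G"
    then have "card F < card G" using facetD(1)[OF pc that(2)] psubset_card_mono by blast
    then show False using facetD(3)[OF pc that(1)] facetD(3)[OF pc that(2)] by simp
  qed
  then show ceq: "cliques m n Fs = Fs" unfolding cliques_def cs_eq by blast
  show "cliques_simplices m n Fs" unfolding cliques_simplices_def ceq using facetD[OF pc] by blast
qed

text \<open>Key combinatorial input for (a): in a closed complex whose cliques are single simplices,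
  distinct facets have distinct \<open>i\<close>-th vertices for every \<open>i\<close> (otherwise \<open>F \<union> G\<close> would be a
  larger simplex with skeleton in \<open>\<Delta>\<close>).\<close>
lemma closed_diagonals_distinct:
  assumes pc: "pure_complex m n Fs" and cs: "cliques_simplices m n Fs" and cl: "closed_wrt m Fs"
    and F: "F \<in> Fs" and G: "G \<in> Fs" and ne: "F \<noteq> G" and i: "i < m"
  shows "sorted_list_of_set F ! i \<noteq> sorted_list_of_set G ! i"
proof
  assume "sorted_list_of_set F ! i = sorted_list_of_set G ! i"
  then have skel: "\<forall>A. A \<subseteq> F \<union> G \<and> card A = m \<longrightarrow> A \<in> Fs"
    using cl F G i unfolding closed_wrt_def by blast
  note FG = facetD[OF pc F] facetD[OF pc G]
  have "\<not> G \<subseteq> F" using FG ne card_subset_eq[of F G] by auto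
  then have "F \<subset> F \<union> G" by blast
  then have bigger: "m < card (F \<union> G)" using psubset_card_mono[of "F \<union> G" F] FG by simp
  then have "F \<union> G \<in> clique_simplices m n Fs"
    unfolding clique_simplices_def using FG skel by auto
  then obtain Y where Y: "Y \<in> cliques m n Fs" "F \<union> G \<subseteq> Y" using clique_above by blast
  have "finite Y" "card Y = m"
    using clique_subset[OF Y(1)] cs Y(1) unfolding cliques_simplices_def by (auto intro: finite_subset)
  then show False using card_mono[OF _ Y(2)] bigger by simp
qed

definition lead_mon :: "'a::comm_ring_1 mpoly \<Rightarrow> mon" where
  "lead_mon f = (SOME \<mu>. leads f \<mu>)"

lemma lead_monI: "leads f \<mu> \<Longrightarrow> lead_mon f = \<mu>"
  unfolding lead_mon_def by (rule some_equality) (auto intro: leads_unique)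

lemma maxminors_coprime_leads:
  assumes m: "0 < m" and pc: "pure_complex m n Fs" and cs: "cliques_simplices m n Fs"
    and cl: "closed_wrt m Fs"
  shows "coprime_leads m n (maxminor m ` Fs :: 'a::comm_ring_1 mpoly set) lead_mon"
    and "inj_on (maxminor m :: nat set \<Rightarrow> 'a mpoly) Fs"
proof -
  have lead: "lead_mon (maxminor m F :: 'a mpoly) = diag_mon m F"
    and leads: "leads (maxminor m F :: 'a mpoly) (diag_mon m F)" if "F \<in> Fs" for F
    using maxminor_leads facetD[OF pc that] lead_monI by blast+
  have cop: "vars (diag_mon m F) \<inter> vars (diag_mon m G) = {}"
    if "F \<in> Fs" "G \<in> Fs" "F \<noteq> G" for F G
    using closed_diagonals_distinct[OF pc cs cl that] unfolding vars_diag_mon by auto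
  have nonempty: "vars (diag_mon m F) \<noteq> {}" for F
    using m unfolding vars_diag_mon by auto
  show inj: "inj_on (maxminor m :: nat set \<Rightarrow> 'a mpoly) Fs"
  proof
    fix F G assume FG: "F \<in> Fs" "G \<in> Fs" "(maxminor m F :: 'a mpoly) = maxminor m G"
    then have "diag_mon m F = diag_mon m G" using lead by metis
    then show "F = G" using cop[OF FG(1,2)] nonempty[of F] by auto
  qed
  show "coprime_leads m n (maxminor m ` Fs :: 'a mpoly set) lead_mon"
    unfolding coprime_leads_def
  proof (intro conjI ballI impI)
    show "finite (maxminor m ` Fs :: 'a mpoly set)" using finite_facets[OF pc] by simp
  next
    fix f assume "f \<in> (maxminor m ` Fs :: 'a mpoly set)"
    then obtain F where F: "F \<in> Fs" "f = maxminor m F" by blast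
    show "f \<in> polyring m n" using maxminor_polyring facetD[OF pc F(1)] F(2) by blast
    show "leads f (lead_mon f)" using F leads lead by simp
    show "0 < wt (lead_mon f)" using F lead wt_diag_mon_pos facetD[OF pc F(1)] m by simp
  next
    fix f g assume "f \<in> (maxminor m ` Fs :: 'a mpoly set)" "g \<in> maxminor m ` Fs" "f \<noteq> g"
    then obtain F G where "F \<in> Fs" "G \<in> Fs" "F \<noteq> G" "f = maxminor m F" "g = maxminor m G" by blast
    then show "vars (lead_mon f) \<inter> vars (lead_mon g) = {}" using lead cop by simp
  qed
qed

theorem closed_minors_regular_sequence:
  assumes m: "0 < m" and pc: "pure_complex m n Fs" and cs: "cliques_simplices m n Fs"
    and cl: "closed_wrt m Fs"
  shows "\<exists>fs. regular_sequence (polyring m n) fs \<and>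
      ideal_gen (polyring m n) (set fs) = (J_Delta m n Fs :: 'a::comm_ring_1 mpoly set)"
proof -
  obtain Fl where Fl: "set Fl = Fs" "distinct Fl" using finite_distinct_list[OF finite_facets[OF pc]] by blast
  define fs where "fs = map (maxminor m :: nat set \<Rightarrow> 'a mpoly) Fl"
  note leads = maxminors_coprime_leads[OF m pc cs cl, where 'a='a]
  have "set fs = maxminor m ` Fs" "distinct fs" unfolding fs_def using Fl leads(2) by (auto simp: distinct_map)
  then have "regular_sequence (polyring m n) fs" "ideal_gen (polyring m n) (set fs) = J_Delta m n Fs"
    using coprime_leads_regular_sequence[of m n fs] leads(1) unfolding J_Delta_def by auto
  then show ?thesis by blast
qed

text \<open>If each facet is the image \<open>g j ` {0..<m}\<close> of a strictly increasing
  map (so \<open>g j p\<close> is its \<open>p\<close>-th vertex) and different facets never have the same vertex at the same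
  position, then two facets sharing their \<open>i\<close>-th vertex coincide, and the complex is closed.\<close>
lemma sorted_list_of_mono_image:
  fixes g :: "nat \<Rightarrow> nat"
  assumes mono: "\<And>p p'. p < p' \<Longrightarrow> p' < m \<Longrightarrow> g p < g p'"
  shows "sorted_list_of_set (g ` {0..<m}) = map g [0..<m]"
proof -
  have inj: "inj_on g {0..<m}"
  proof (rule inj_onI)
    fix x y assume "x \<in> {0..<m}" "y \<in> {0..<m}" "g x = g y"
    then show "x = y" using mono by (metis atLeastLessThan_iff linorder_neqE_nat less_irrefl)
  qed
  have "sorted_wrt (<) (map g [0..<m])"
    unfolding sorted_wrt_map by (rule sorted_wrt_mono_rel[of _ "(<)"]) (auto intro: mono simp: sorted_wrt_upt)
  moreover have "set (map g [0..<m]) = g ` {0..<m}" by simp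
  moreover have "length (map g [0..<m]) = card (g ` {0..<m})" using inj by (simp add: card_image)
  ultimately show ?thesis using sorted_list_of_set_unique[of "g ` {0..<m}" "map g [0..<m]"] by simp
qed

lemma card_mono_image:
  fixes g :: "nat \<Rightarrow> nat"
  assumes mono: "\<And>p p'. p < p' \<Longrightarrow> p' < m \<Longrightarrow> g p < g p'"
  shows "card (g ` {0..<m}) = m"
proof -
  have "length (sorted_list_of_set (g ` {0..<m})) = m" using sorted_list_of_mono_image[OF mono] by simp
  then show ?thesis by simp
qed

lemma closed_by_positions:
  fixes g :: "nat \<Rightarrow> nat \<Rightarrow> nat"
  assumes mono: "\<And>j p p'. j < r \<Longrightarrow> p < p' \<Longrightarrow> p' < m \<Longrightarrow> g j p < g j p'"
    and sep: "\<And>j l p. j < r \<Longrightarrow> l < r \<Longrightarrow> p < m \<Longrightarrow> g j p = g l p \<Longrightarrow> j = l"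
  shows "closed_wrt m ((\<lambda>j. g j ` {0..<m}) ` {0..<r})"
  unfolding closed_wrt_def
proof (intro ballI impI allI)
  fix F G A
  assume F: "F \<in> (\<lambda>j. g j ` {0..<m}) ` {0..<r}" and G: "G \<in> (\<lambda>j. g j ` {0..<m}) ` {0..<r}"
    and ex: "\<exists>i<m. sorted_list_of_set F ! i = sorted_list_of_set G ! i"
    and A: "A \<subseteq> F \<union> G \<and> card A = m"
  obtain j where j: "j < r" "F = g j ` {0..<m}" using F by auto
  obtain l where l: "l < r" "G = g l ` {0..<m}" using G by auto
  obtain i where i: "i < m" "sorted_list_of_set F ! i = sorted_list_of_set G ! i" using ex by blast
  have "g j i = g l i" using i j l sorted_list_of_mono_image[of m "g j"] sorted_list_of_mono_image[of m "g l"] mono by simp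
  then have "j = l" using sep j(1) l(1) i(1) by blast
  then have FG: "G = F" using j l by simp
  have cF: "card F = m" using j card_mono_image[of m "g j"] mono by simp
  have "finite F" using j by simp
  then have "A = F" using A FG cF by (metis Un_absorb card_subset_eq)
  then show "A \<in> (\<lambda>j. g j ` {0..<m}) ` {0..<r}" using F by simp
qed

lemma rank_relabelling:
  fixes kk :: "nat \<Rightarrow> nat" and n :: nat
  defines "lt \<equiv> \<lambda>u v. kk u < kk v \<or> (kk u = kk v \<and> u < v)"
  defines "\<pi> \<equiv> \<lambda>v. card {u\<in>{1..n}. lt u v} + 1"
  shows "bij_betw \<pi> {1..n} {1..n}"
    "\<And>v w. v \<in> {1..n} \<Longrightarrow> w \<in> {1..n} \<Longrightarrow> kk v < kk w \<Longrightarrow> \<pi> v < \<pi> w"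
proof -
  have trans: "lt u w" if "lt u v" "lt v w" for u v w using that unfolding lt_def by auto
  have irr: "\<not> lt v v" for v unfolding lt_def by auto
  have tot: "v = w \<or> lt v w \<or> lt w v" for v w unfolding lt_def by auto
  have mono: "\<pi> v < \<pi> w" if "v \<in> {1..n}" "w \<in> {1..n}" "lt v w" for v w
  proof -
    have "{u\<in>{1..n}. lt u v} \<subset> {u\<in>{1..n}. lt u w}"
    proof
      show "{u\<in>{1..n}. lt u v} \<subseteq> {u\<in>{1..n}. lt u w}" using trans that(3) by blast
      show "{u\<in>{1..n}. lt u v} \<noteq> {u\<in>{1..n}. lt u w}" using that irr by blast
    qed
    then have "card {u\<in>{1..n}. lt u v} < card {u\<in>{1..n}. lt u w}"
      by (rule psubset_card_mono[rotated]) simp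
    then show ?thesis unfolding \<pi>_def by simp
  qed
  have inj: "inj_on \<pi> {1..n}"
  proof (rule inj_onI)
    fix v w assume "v \<in> {1..n}" "w \<in> {1..n}" "\<pi> v = \<pi> w"
    then show "v = w" using tot[of v w] mono by (metis less_irrefl)
  qed
  have sub: "\<pi> ` {1..n} \<subseteq> {1..n}"
  proof
    fix x assume "x \<in> \<pi> ` {1..n}"
    then obtain v where v: "v \<in> {1..n}" "x = \<pi> v" by blast
    have "{u\<in>{1..n}. lt u v} \<subseteq> {1..n} - {v}" using irr by blast
    then have "card {u\<in>{1..n}. lt u v} \<le> card ({1..n} - {v})" by (rule card_mono[rotated]) simp
    also have "\<dots> = n - 1" using v by simp
    finally show "x \<in> {1..n}" using v unfolding \<pi>_def by auto
  qed
  have "card (\<pi> ` {1..n}) = card {1..n::nat}" using inj by (simp add: card_image)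
  then have "\<pi> ` {1..n} = {1..n}" using sub by (metis card_subset_eq finite_atLeastAtMost)
  then show "bij_betw \<pi> {1..n} {1..n}" using inj unfolding bij_betw_def by simp
  show "\<And>v w. v \<in> {1..n} \<Longrightarrow> w \<in> {1..n} \<Longrightarrow> kk v < kk w \<Longrightarrow> \<pi> v < \<pi> w"
    using mono unfolding lt_def by blast
qed

text \<open>A position labelling of \<open>r\<close> facets: \<open>q j p\<close> is the \<open>p\<close>-th vertex of the \<open>j\<close>-th facet
  (\<open>p < m\<close>), and a vertex shared by facets \<open>j \<noteq> l\<close> sits at position \<open>l\<close> in facet \<open>j\<close> and at
  position \<open>j\<close> in facet \<open>l\<close>.\<close>
definition position_labelling :: "nat \<Rightarrow> nat \<Rightarrow> nat \<Rightarrow> (nat \<Rightarrow> nat \<Rightarrow> nat) \<Rightarrow> bool" where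
  "position_labelling m n r q \<longleftrightarrow>
     (\<forall>j<r. inj_on (q j) {0..<m} \<and> q j ` {0..<m} \<subseteq> {1..n}) \<and>
     (\<forall>j<r. \<forall>l<r. \<forall>p<m. \<forall>p'<m. j \<noteq> l \<and> q j p = q l p' \<longrightarrow> p = l \<and> p' = j)"

definition labelled_facets :: "nat \<Rightarrow> nat \<Rightarrow> (nat \<Rightarrow> nat \<Rightarrow> nat) \<Rightarrow> nat set set" where
  "labelled_facets m r q = (\<lambda>j. q j ` {0..<m}) ` {0..<r}"

lemma position_labellingD:
  assumes "position_labelling m n r q" "j < r"
  shows "inj_on (q j) {0..<m}" "p < m \<Longrightarrow> q j p \<in> {1..n}"
    "l < r \<Longrightarrow> p < m \<Longrightarrow> p' < m \<Longrightarrow> j \<noteq> l \<Longrightarrow> q j p = q l p' \<Longrightarrow> p = l \<and> p' = j"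
  using assms unfolding position_labelling_def by (auto simp: image_subset_iff)

text \<open>A complex with a position labelling is closed: order the vertices by the key
  \<open>j + p\<close> (well defined on shared vertices \<open>q j l = q l j\<close>); then each facet is listed increasingly
  and no two facets share a vertex at the same position.\<close>
lemma closed_of_position_labelling:
  assumes pl: "position_labelling m n r q"
  shows "closed_complex m n (labelled_facets m r q)"
proof -
  have key_eq: "j + p = l + p'" if "j < r" "l < r" "p < m" "p' < m" "q j p = q l p'" for j l p p'
  proof (cases "j = l")
    case True
    then show ?thesis using inj_onD[OF position_labellingD(1)[OF pl that(1)]] that by simp
  next
    case False
    then show ?thesis using position_labellingD(3)[OF pl that(1,2,3,4) False that(5)] by simp
  qed
  define kk where "kk x = (SOME s. \<exists>j<r. \<exists>p<m. x = q j p \<and> s = j + p)" for x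
  have kkq: "kk (q j p) = j + p" if "j < r" "p < m" for j p
  proof -
    have "\<exists>j'<r. \<exists>p'<m. q j p = q j' p' \<and> kk (q j p) = j' + p'"
      unfolding kk_def by (rule someI_ex) (use that in blast)
    then obtain j' p' where "j' < r" "p' < m" "q j p = q j' p'" "kk (q j p) = j' + p'" by blast
    then show ?thesis using key_eq[OF that(1) _ that(2)] by simp
  qed
  define \<pi> where "\<pi> v = card {u\<in>{1..n}. kk u < kk v \<or> (kk u = kk v \<and> u < v)} + 1" for v
  have \<pi>: "bij_betw \<pi> {1..n} {1..n}"
    "\<And>v w. v \<in> {1..n} \<Longrightarrow> w \<in> {1..n} \<Longrightarrow> kk v < kk w \<Longrightarrow> \<pi> v < \<pi> w"
    unfolding \<pi>_def by (rule rank_relabelling(1), rule rank_relabelling(2))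
  define g where "g j p = \<pi> (q j p)" for j p
  have "closed_wrt m ((\<lambda>j. g j ` {0..<m}) ` {0..<r})"
  proof (rule closed_by_positions)
    show "g j p < g j p'" if "j < r" "p < p'" "p' < m" for j p p'
      unfolding g_def using \<pi>(2) position_labellingD(2)[OF pl] kkq that by simp
    show "j = l" if "j < r" "l < r" "p < m" "g j p = g l p" for j l p
    proof (rule ccontr)
      assume "j \<noteq> l"
      moreover have "q j p = q l p"
        using inj_onD[OF bij_betw_imp_inj_on[OF \<pi>(1)]] that position_labellingD(2)[OF pl] unfolding g_def by simp
      ultimately show False using position_labellingD(3)[OF pl that(1,2,3,3)] by simp
    qed
  qed
  moreover have "(`) \<pi> ` labelled_facets m r q = (\<lambda>j. g j ` {0..<m}) ` {0..<r}"
    unfolding labelled_facets_def g_def by (simp add: image_image)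
  ultimately show ?thesis unfolding closed_complex_def using \<pi>(1) by auto
qed

lemma labelled_facets_meet:
  assumes pl: "position_labelling m n r q" and "j < r" "l < r" "j \<noteq> l"
  shows "q j ` {0..<m} \<inter> q l ` {0..<m} \<subseteq> {q j l}"
  using position_labellingD(3)[OF pl assms(2,3)] assms(4) by fastforce

text \<open>No vertex lies in three facets of a labelled complex: in facet \<open>j\<close> it would sit both at
  position \<open>l\<close> and at position \<open>k\<close>.\<close>
lemma labelled_facets_no_triple:
  assumes pl: "position_labelling m n r q" and jlk: "j < r" "l < r" "k < r" "j \<noteq> l" "j \<noteq> k" "l \<noteq> k"
  shows "q j ` {0..<m} \<inter> q l ` {0..<m} \<inter> q k ` {0..<m} = {}"
proof (rule ccontr)
  assume "q j ` {0..<m} \<inter> q l ` {0..<m} \<inter> q k ` {0..<m} \<noteq> {}"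
  then obtain x where x: "x \<in> q j ` {0..<m}" "x \<in> q l ` {0..<m}" "x \<in> q k ` {0..<m}" by blast
  obtain p where p: "p < m" "x = q j p" using x(1) by auto
  obtain p' where p': "p' < m" "x = q l p'" using x(2) by auto
  obtain p'' where p'': "p'' < m" "x = q k p''" using x(3) by auto
  have "p = l" "p = k"
    using position_labellingD(3)[OF pl jlk(1)] jlk p p' p'' by metis+
  then show False using jlk(6) by simp
qed

lemma labelled_facet_card:
  assumes "position_labelling m n r q" "j < r"
  shows "card (q j ` {0..<m}) = m"
  using position_labellingD(1)[OF assms] by (simp add: card_image)

lemma labelled_complex:
  assumes pl: "position_labelling m n r q" and m3: "3 \<le> m" and r: "0 < r"
  defines "Fs \<equiv> labelled_facets m r q"
  shows "pure_complex m n Fs" "closed_complex m n Fs" "cond_i m n Fs" "cond_ii m n Fs"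
    "cliques_simplices m n Fs" "cliques m n Fs = Fs"
proof -
  have facet: "F \<in> Fs \<longleftrightarrow> (\<exists>j<r. F = q j ` {0..<m})" for F
    unfolding Fs_def labelled_facets_def by auto
  have "F \<subseteq> {1..n} \<and> card F = m" if F: "F \<in> Fs" for F
  proof -
    obtain j where "j < r" "F = q j ` {0..<m}" using F unfolding facet by blast
    then show ?thesis using position_labellingD(2)[OF pl] labelled_facet_card[OF pl] by auto
  qed
  moreover have "Fs \<noteq> {}" using r facet by blast
  ultimately show pc: "pure_complex m n Fs" unfolding pure_complex_def by blast
  have meet: "F \<inter> G \<subseteq> {q j l}" if "j < r" "l < r" "F = q j ` {0..<m}" "G = q l ` {0..<m}" "F \<noteq> G" for F G j l
  proof -
    have "j \<noteq> l" using that(3-5) by blast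
    then show ?thesis using labelled_facets_meet[OF pl that(1,2)] that(3,4) by simp
  qed
  have sparse: "card (F \<inter> G) \<le> 1" if FG: "F \<in> Fs" "G \<in> Fs" "F \<noteq> G" for F G
  proof -
    obtain j l where jl: "j < r" "l < r" "F = q j ` {0..<m}" "G = q l ` {0..<m}"
      using FG(1,2) unfolding facet by blast
    have "F \<inter> G \<subseteq> {q j l}" by (rule meet[OF jl FG(3)])
    then show ?thesis using card_mono[of "{q j l}" "F \<inter> G"] by simp
  qed
  note cl = cliques_of_sparse_facets[OF pc m3 sparse]
  show "cliques m n Fs = Fs" "cliques_simplices m n Fs" using cl by simp_all
  have cliques: "cliques m n Fs = Fs" by (rule cl(1))
  show "cond_i m n Fs" unfolding cond_i_def cliques using sparse by blast
  show "cond_ii m n Fs" unfolding cond_ii_def cliques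
  proof (intro ballI impI)
    fix U V W assume UVW: "U \<in> Fs" "V \<in> Fs" "W \<in> Fs" and ne: "U \<noteq> V \<and> U \<noteq> W \<and> V \<noteq> W"
    obtain j where j: "j < r" "U = q j ` {0..<m}" using UVW(1) unfolding facet by blast
    obtain l where l: "l < r" "V = q l ` {0..<m}" using UVW(2) unfolding facet by blast
    obtain k where k: "k < r" "W = q k ` {0..<m}" using UVW(3) unfolding facet by blast
    have "j \<noteq> l" "j \<noteq> k" "l \<noteq> k" using ne j l k by auto
    then show "U \<inter> V \<inter> W = {}"
      using labelled_facets_no_triple[OF pl j(1) l(1) k(1)] j l k by simp
  qed
  show "closed_complex m n Fs" unfolding Fs_def by (rule closed_of_position_labelling[OF pl])
qed

lemma mult_add_eq_cancel:
  fixes a b t t' K :: nat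
  assumes "a * K + t = b * K + t'" "t < K" "t' < K"
  shows "a = b" "t = t'"
proof -
  have e1: "(a * K + t) div K = a" using assms(2) by simp
  have e2: "(b * K + t') div K = b" using assms(3) by simp
  show "a = b" using e1 e2 assms(1) by metis
  then show "t = t'" using assms(1) by simp
qed

text \<open>For a graph on \<open>{0..<r}\<close> (\<open>r \<le> m\<close>) with symmetric adjacency \<open>adj\<close>,
  facet \<open>j\<close> gets the vertices \<open>lbl j p\<close>, \<open>p < m\<close>: the vertex at position \<open>p\<close> is shared with facet
  \<open>p\<close> if \<open>j\<close> and \<open>p\<close> are adjacent, and private otherwise. The label encodes the key \<open>j + p\<close> and
  a tag (the smaller endpoint of the edge, or \<open>m + j\<close> for private vertices).\<close>
locale graph_labels =
  fixes m r :: nat and adj :: "nat \<Rightarrow> nat \<Rightarrow> bool"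
  assumes rm: "r \<le> m" and sym: "\<And>j l. adj j l = adj l j"
begin

definition tag :: "nat \<Rightarrow> nat \<Rightarrow> nat" where
  "tag j p = (if p < r \<and> p \<noteq> j \<and> adj j p then min j p else m + j)"

definition lbl :: "nat \<Rightarrow> nat \<Rightarrow> nat" where
  "lbl j p = (j + p) * (2 * m) + tag j p + 1"

lemma tag_lt: "j < r \<Longrightarrow> tag j p < 2 * m"
  unfolding tag_def using rm by auto

lemma lbl_mono: assumes "j < r" "p < p'" shows "lbl j p < lbl j p'"
proof -
  have "lbl j p < (j + p) * (2 * m) + 2 * m + 1" unfolding lbl_def using tag_lt[OF assms(1)] by simp
  also have "\<dots> = (j + Suc p) * (2 * m) + 1" by (simp add: algebra_simps)
  also have "\<dots> \<le> (j + p') * (2 * m) + 1" using assms(2) by (intro add_right_mono mult_right_mono) auto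
  also have "\<dots> \<le> lbl j p'" unfolding lbl_def by simp
  finally show ?thesis .
qed

lemma lbl_inj: "j < r \<Longrightarrow> lbl j p = lbl j p' \<Longrightarrow> p = p'"
  using lbl_mono by (metis less_irrefl linorder_neqE_nat)

lemma lbl_dec:
  assumes "j < r" "l < r" "lbl j p = lbl l p'"
  shows "j + p = l + p'" "tag j p = tag l p'"
proof -
  have e: "(j + p) * (2 * m) + tag j p = (l + p') * (2 * m) + tag l p'" using assms(3) unfolding lbl_def by simp
  show "j + p = l + p'" using mult_add_eq_cancel(1)[OF e tag_lt[OF assms(1)] tag_lt[OF assms(2)]] .
  show "tag j p = tag l p'" using mult_add_eq_cancel(2)[OF e tag_lt[OF assms(1)] tag_lt[OF assms(2)]] .
qed

lemma lbl_inter: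
  assumes j: "j < r" and l: "l < r" and jl: "j \<noteq> l" and e: "lbl j p = lbl l p'"
  shows "p = l" "p' = j" "adj j l"
proof -
  have s: "j + p = l + p'" and t: "tag j p = tag l p'" using lbl_dec[OF j l e] by auto
  have jsh: "p < r \<and> p \<noteq> j \<and> adj j p"
  proof (rule ccontr)
    assume "\<not> (p < r \<and> p \<noteq> j \<and> adj j p)"
    then have "tag j p = m + j" unfolding tag_def by auto
    then have "tag l p' = m + j" using t by simp
    moreover have "tag l p' = min l p' \<or> tag l p' = m + l" unfolding tag_def by auto
    ultimately show False using l rm jl by auto
  qed
  have lsh: "p' < r \<and> p' \<noteq> l \<and> adj l p'"
  proof (rule ccontr)
    assume "\<not> (p' < r \<and> p' \<noteq> l \<and> adj l p')"
    then have "tag l p' = m + l" unfolding tag_def by auto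
    then have "tag j p = m + l" using t by simp
    moreover have "tag j p = min j p" using jsh unfolding tag_def by auto
    ultimately show False using j rm by auto
  qed
  have "min j p = min l p'" using t jsh lsh unfolding tag_def by auto
  then have "p = l \<and> p' = j" using s jl by (auto simp: min_def split: if_splits)
  then show "p = l" "p' = j" "adj j l" using jsh by auto
qed

lemma lbl_shared:
  assumes "j < r" "l < r" "j \<noteq> l" "adj j l"
  shows "lbl j l = lbl l j"
  using assms sym[of j l] unfolding lbl_def tag_def by (simp add: min.commute add.commute)

lemma lbl_range: "j < r \<Longrightarrow> p < m \<Longrightarrow> 1 \<le> lbl j p \<and> lbl j p \<le> (2 * m + 1) * (2 * m)"
proof -
  assume a: "j < r" "p < m"
  have "lbl j p < (j + p) * (2 * m) + 2 * m + 1" unfolding lbl_def using tag_lt[OF a(1)] by simp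
  also have "\<dots> = (j + p + 1) * (2 * m) + 1" by (simp add: algebra_simps)
  also have "\<dots> \<le> (2 * m) * (2 * m) + 1" using a rm by (intro add_right_mono mult_right_mono) auto
  finally have "lbl j p \<le> (2 * m) * (2 * m)" by simp
  also have "\<dots> \<le> (2 * m + 1) * (2 * m)" by simp
  finally show ?thesis unfolding lbl_def by simp
qed

lemma lbl_position_labelling: "position_labelling m ((2 * m + 1) * (2 * m)) r lbl"
  unfolding position_labelling_def
proof (intro conjI allI impI)
  fix j assume j: "j < r"
  show "inj_on (lbl j) {0..<m}" using lbl_inj[OF j] by (auto intro: inj_onI)
  show "lbl j ` {0..<m} \<subseteq> {1..(2 * m + 1) * (2 * m)}" using lbl_range[OF j] by auto
next
  fix j l p p' assume "j < r" "l < r" "p < m" "p' < m" "j \<noteq> l \<and> lbl j p = lbl l p'"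
  then show "p = l" "p' = j" using lbl_inter(1,2) by blast+
qed

lemma lbl_facets_meet_iff:
  assumes "j < r" "l < r" "j \<noteq> l"
  shows "lbl j ` {0..<m} \<inter> lbl l ` {0..<m} \<noteq> {} \<longleftrightarrow> adj j l"
proof
  assume "lbl j ` {0..<m} \<inter> lbl l ` {0..<m} \<noteq> {}"
  then obtain x where "x \<in> lbl j ` {0..<m}" "x \<in> lbl l ` {0..<m}" by blast
  then obtain p p' where "lbl j p = lbl l p'" by (elim imageE) simp
  then show "adj j l" using lbl_inter(3)[OF assms] by simp
next
  assume "adj j l"
  then have "lbl j l = lbl l j" by (rule lbl_shared[OF assms])
  moreover have "lbl j l \<in> lbl j ` {0..<m}" "lbl l j \<in> lbl l ` {0..<m}" using assms rm by auto
  ultimately show "lbl j ` {0..<m} \<inter> lbl l ` {0..<m} \<noteq> {}" by auto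
qed

lemma lbl_facets_inj: "inj_on (\<lambda>j. lbl j ` {0..<m}) {0..<r}"
proof
  fix j l assume "j \<in> {0..<r}" "l \<in> {0..<r}" and eq: "lbl j ` {0..<m} = lbl l ` {0..<m}"
  then have jl: "j < r" "l < r" by auto
  show "j = l"
  proof (rule ccontr)
    assume ne: "j \<noteq> l"
    have "lbl j j \<in> lbl j ` {0..<m} \<inter> lbl l ` {0..<m}" using eq jl rm by auto
    moreover have "lbl j ` {0..<m} \<inter> lbl l ` {0..<m} \<subseteq> {lbl j l}"
      by (rule labelled_facets_meet[OF lbl_position_labelling jl ne])
    ultimately have "lbl j j = lbl j l" by blast
    then show False using lbl_inj[OF jl(1)] ne by blast
  qed
qed

end

theorem graph_realization:
  fixes V :: "'v set" and E :: "'v set set"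
  assumes "simple_graph V E" "V \<noteq> {}" "card V \<le> m" "3 \<le> m"
  shows "\<exists>n Fs. pure_complex m n Fs \<and> closed_complex m n Fs \<and> cond_i m n Fs \<and> cond_ii m n Fs \<and>
      cliques_simplices m n Fs \<and> clique_graph_iso m n Fs V E"
proof -
  define r where "r = card V"
  have finV: "finite V" using assms(1) unfolding simple_graph_def by blast
  have r: "0 < r" "r \<le> m" using assms finV unfolding r_def by (auto simp: card_gt_0_iff)
  obtain v where v: "bij_betw v {0..<r} V" using ex_bij_betw_nat_finite[OF finV] unfolding r_def by blast
  define adj where "adj j l = ({v j, v l} \<in> E)" for j l
  interpret graph_labels m r adj
    by unfold_locales (auto simp: r adj_def insert_commute)
  define n where "n = (2 * m + 1) * (2 * m)"
  define Fs where "Fs = labelled_facets m r lbl"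
  note complex = labelled_complex[OF lbl_position_labelling assms(4) r(1), folded n_def Fs_def]
  define Fj where "Fj j = lbl j ` {0..<m}" for j
  have bFj: "bij_betw Fj {0..<r} Fs"
    unfolding Fs_def labelled_facets_def Fj_def using lbl_facets_inj by (simp add: bij_betw_def)
  define f where "f C = v (the_inv_into {0..<r} Fj C)" for C
  have "bij_betw f Fs V"
    unfolding f_def using bij_betw_trans[OF bij_betw_the_inv_into[OF bFj] v] by (simp add: comp_def)
  moreover have "({f C, f D} \<in> E) = (C \<inter> D \<noteq> {})" if CD: "C \<in> Fs" "D \<in> Fs" "C \<noteq> D" for C D
  proof -
    obtain j l where jl: "j < r" "l < r" "C = Fj j" "D = Fj l"
      using CD(1,2) unfolding Fs_def labelled_facets_def Fj_def by auto
    then have "j \<noteq> l" using CD(3) by auto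
    moreover have "f C = v j" "f D = v l"
      unfolding f_def jl using the_inv_into_f_f[OF bij_betw_imp_inj_on[OF bFj]] jl by auto
    ultimately show ?thesis using lbl_facets_meet_iff[OF jl(1,2)] jl unfolding adj_def Fj_def by simp
  qed
  ultimately have "clique_graph_iso m n Fs V E"
    unfolding clique_graph_iso_def complex(6) by blast
  then show ?thesis using complex by blast
qed

lemma extend_inj_to_bij:
  assumes fin: "finite A" "finite B" and card: "card A = card B"
    and S: "S \<subseteq> A" and h: "inj_on h S" "h ` S \<subseteq> B"
  shows "\<exists>q. bij_betw q A B \<and> (\<forall>x\<in>S. q x = h x)"
proof -
  have "card (A - S) = card (B - h ` S)"
    using fin card S h by (simp add: card_Diff_subset card_image finite_subset)
  then obtain b where b: "bij_betw b (A - S) (B - h ` S)"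
    using finite_same_card_bij fin by blast
  define q where "q x = (if x \<in> S then h x else b x)" for x
  have "bij_betw q S (h ` S)"
    using h(1) unfolding q_def by (simp add: bij_betw_def inj_on_def)
  moreover have "bij_betw q (A - S) (B - h ` S)"
    using b unfolding q_def by (rule bij_betw_cong[THEN iffD1, rotated]) simp
  ultimately have "bij_betw q (S \<union> (A - S)) (h ` S \<union> (B - h ` S))"
    by (rule bij_betw_combine) blast
  moreover have "S \<union> (A - S) = A" "h ` S \<union> (B - h ` S) = B" using S h(2) by auto
  ultimately show ?thesis unfolding q_def by auto
qed

text \<open>In a complex where any two facets share at most one vertex and no vertex lies in three facets,
  the facets \<open>e 0, \<dots>, e (r-1)\<close> (\<open>r \<le> m\<close>) can be listed so that the vertex shared by \<open>e j\<close> and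
  \<open>e l\<close> sits at position \<open>l\<close> of \<open>e j\<close>: these prescribed positions are distinct, and the remaining
  positions are filled arbitrarily.\<close>
lemma facet_position_maps:
  assumes pc: "pure_complex m n Fs" and e: "bij_betw e {0..<r} Fs" and few: "r \<le> m"
    and sparse: "\<And>F G. F \<in> Fs \<Longrightarrow> G \<in> Fs \<Longrightarrow> F \<noteq> G \<Longrightarrow> card (F \<inter> G) \<le> 1"
    and no_triple: "\<And>F G H. F \<in> Fs \<Longrightarrow> G \<in> Fs \<Longrightarrow> H \<in> Fs \<Longrightarrow> F \<noteq> G \<Longrightarrow> F \<noteq> H \<Longrightarrow> G \<noteq> H \<Longrightarrow>
      F \<inter> G \<inter> H = {}"
  shows "\<exists>q. \<forall>j<r. bij_betw (q j) {0..<m} (e j) \<and>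
    (\<forall>l<r. l \<noteq> j \<and> e j \<inter> e l \<noteq> {} \<longrightarrow> e j \<inter> e l = {q j l})"
proof -
  have eF: "e j \<in> Fs" if "j < r" for j using e that unfolding bij_betw_def by auto
  have e_ne: "e j \<noteq> e l" if "j < r" "l < r" "j \<noteq> l" for j l
    using e that unfolding bij_betw_def inj_on_def by auto
  note efacet = facetD[OF pc eF]
  define S where "S j = {l. l < r \<and> l \<noteq> j \<and> e j \<inter> e l \<noteq> {}}" for j
  define sh where "sh j l = (SOME x. e j \<inter> e l = {x})" for j l
  have sh: "e j \<inter> e l = {sh j l}" if "j < r" "l \<in> S j" for j l
  proof -
    have l: "l < r" "l \<noteq> j" "e j \<inter> e l \<noteq> {}" using that(2) unfolding S_def by auto
    have "card (e j \<inter> e l) \<le> 1" using sparse[OF eF[OF that(1)] eF[OF l(1)] e_ne[OF that(1) l(1)]] l(2) by simp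
    moreover have "finite (e j \<inter> e l)" using efacet(1)[OF that(1)] by blast
    ultimately have "\<exists>x. e j \<inter> e l = {x}" using l(3)
      by (metis card_0_eq card_1_singletonE le_eq_less_or_eq less_one)
    then show ?thesis unfolding sh_def by (rule someI_ex)
  qed
  have sh_inj: "inj_on (sh j) (S j)" if j: "j < r" for j
  proof
    fix l l' assume l: "l \<in> S j" "l' \<in> S j" and eq: "sh j l = sh j l'"
    show "l = l'"
    proof (rule ccontr)
      assume ne: "l \<noteq> l'"
      have lr: "l < r" "l \<noteq> j" "l' < r" "l' \<noteq> j" using l unfolding S_def by auto
      have "sh j l \<in> e j \<inter> e l \<inter> e l'" using sh[OF j l(1)] sh[OF j l(2)] eq by auto
      moreover have "e j \<noteq> e l" "e j \<noteq> e l'" "e l \<noteq> e l'" using e_ne j lr ne by auto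
      ultimately show False using no_triple[OF eF[OF j] eF[OF lr(1)] eF[OF lr(3)]] by blast
    qed
  qed
  have "\<forall>j. \<exists>qj. j < r \<longrightarrow> bij_betw qj {0..<m} (e j) \<and> (\<forall>l\<in>S j. qj l = sh j l)"
  proof
    fix j show "\<exists>qj. j < r \<longrightarrow> bij_betw qj {0..<m} (e j) \<and> (\<forall>l\<in>S j. qj l = sh j l)"
    proof (cases "j < r")
      case True
      have "S j \<subseteq> {0..<m}" using few unfolding S_def by auto
      moreover have "sh j ` S j \<subseteq> e j" using sh[OF True] by blast
      ultimately show ?thesis
        using extend_inj_to_bij[OF _ efacet(1)[OF True] _ _ sh_inj[OF True]] efacet(3)[OF True] by auto
    qed simp
  qed
  from choice[OF this] obtain q
    where q: "\<And>j. j < r \<Longrightarrow> bij_betw (q j) {0..<m} (e j) \<and> (\<forall>l\<in>S j. q j l = sh j l)"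
    by blast
  have "e j \<inter> e l = {q j l}" if jl: "j < r" "l < r" "l \<noteq> j" "e j \<inter> e l \<noteq> {}" for j l
  proof -
    have "l \<in> S j" using jl unfolding S_def by blast
    then show ?thesis using sh[OF jl(1)] q[OF jl(1)] by simp
  qed
  then show ?thesis using q by (intro exI[of _ q]) blast
qed

lemma sparse_complex_position_labelling:
  assumes pc: "pure_complex m n Fs" and few: "card Fs \<le> m"
    and sparse: "\<And>F G. F \<in> Fs \<Longrightarrow> G \<in> Fs \<Longrightarrow> F \<noteq> G \<Longrightarrow> card (F \<inter> G) \<le> 1"
    and no_triple: "\<And>F G H. F \<in> Fs \<Longrightarrow> G \<in> Fs \<Longrightarrow> H \<in> Fs \<Longrightarrow> F \<noteq> G \<Longrightarrow> F \<noteq> H \<Longrightarrow> G \<noteq> H \<Longrightarrow>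
      F \<inter> G \<inter> H = {}"
  shows "\<exists>r q. position_labelling m n r q \<and> Fs = labelled_facets m r q"
proof -
  define r where "r = card Fs"
  obtain e where e: "bij_betw e {0..<r} Fs"
    using ex_bij_betw_nat_finite[OF finite_facets[OF pc]] unfolding r_def by blast
  have efacet: "e j \<subseteq> {1..n}" if "j < r" for j
    using facetD(2)[OF pc] bij_betwE[OF e] that by simp
  from facet_position_maps[OF pc e few[folded r_def] sparse no_triple] obtain q
    where q_props: "\<forall>j<r. bij_betw (q j) {0..<m} (e j) \<and>
      (\<forall>l<r. l \<noteq> j \<and> e j \<inter> e l \<noteq> {} \<longrightarrow> e j \<inter> e l = {q j l})"
    by blast
  have q: "bij_betw (q j) {0..<m} (e j)" if "j < r" for j using q_props that by blast
  have shared: "e j \<inter> e l = {q j l}" if "j < r" "l < r" "l \<noteq> j" "e j \<inter> e l \<noteq> {}" for j l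
    using q_props that by blast
  have q_in: "q j p \<in> e j" if "j < r" "p < m" for j p
    using q[OF that(1)] that(2) unfolding bij_betw_def by auto
  have q_inj: "inj_on (q j) {0..<m}" if "j < r" for j using q[OF that] bij_betw_imp_inj_on by blast
  have shared_pos: "p = l" if jl: "j < r" "l < r" "j \<noteq> l" and p: "p < m" and x: "q j p \<in> e l" for j l p
  proof -
    have "q j p \<in> e j \<inter> e l" using q_in[OF jl(1) p] x by blast
    then have "q j p = q j l" using shared[OF jl(1,2)] jl(3) by blast
    moreover have "l < m" using jl(2) few unfolding r_def by simp
    ultimately show "p = l" using inj_onD[OF q_inj[OF jl(1)]] p by simp
  qed
  have "position_labelling m n r q"
    unfolding position_labelling_def
  proof (intro conjI allI impI)
    fix j assume j: "j < r"
    show "inj_on (q j) {0..<m}" by (rule q_inj[OF j])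
    show "q j ` {0..<m} \<subseteq> {1..n}" using q_in[OF j] efacet[OF j] by auto
  next
    fix j l p p' assume jl: "j < r" "l < r" and pp: "p < m" "p' < m" and eq: "j \<noteq> l \<and> q j p = q l p'"
    show "p = l" using shared_pos[OF jl _ pp(1)] q_in[OF jl(2) pp(2)] eq by simp
    show "p' = j" using shared_pos[OF jl(2,1) _ pp(2)] q_in[OF jl(1) pp(1)] eq by simp
  qed
  moreover have "Fs = labelled_facets m r q"
  proof -
    have "Fs = e ` {0..<r}" using e unfolding bij_betw_def by simp
    also have "\<dots> = (\<lambda>j. q j ` {0..<m}) ` {0..<r}"
      using q unfolding bij_betw_def by (auto intro!: image_cong)
    finally show ?thesis unfolding labelled_facets_def .
  qed
  ultimately show ?thesis by blast
qed

theorem few_facets_closed: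
  assumes pc: "pure_complex m n Fs" and ci: "cond_i m n Fs" and cii: "cond_ii m n Fs"
    and cs: "cliques_simplices m n Fs" and few: "card Fs \<le> m"
  shows "closed_complex m n Fs"
proof -
  have cliques: "cliques m n Fs = Fs" by (rule cliques_eq_facets[OF pc cs])
  obtain r q where "position_labelling m n r q" "Fs = labelled_facets m r q"
  proof (rule exE[OF sparse_complex_position_labelling[OF pc few]])
    show "card (F \<inter> G) \<le> 1" if "F \<in> Fs" "G \<in> Fs" "F \<noteq> G" for F G
      using ci that unfolding cond_i_def cliques by blast
    show "F \<inter> G \<inter> H = {}" if "F \<in> Fs" "G \<in> Fs" "H \<in> Fs" "F \<noteq> G" "F \<noteq> H" "G \<noteq> H" for F G H
      using cii that unfolding cond_ii_def cliques by blast
  qed blast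
  then show ?thesis using closed_of_position_labelling[of m n r q] by simp
qed

theorem theorem3p4:
  shows
   "(\<forall>(m::nat) (n::nat) Fs. 3 \<le> m \<and> pure_complex m n Fs \<and> cond_i m n Fs \<and> cond_ii m n Fs \<and>
        cliques_simplices m n Fs \<and> closed_wrt m Fs \<longrightarrow>
        (\<exists>fs. regular_sequence (polyring m n) fs \<and>
              ideal_gen (polyring m n) (set fs) = (J_Delta m n Fs :: 'a::field mpoly set)))
    \<and> (\<forall>(V::'v set) E (m::nat). simple_graph V E \<and> V \<noteq> {} \<and> card V \<le> m \<and> 3 \<le> m \<longrightarrow>
        (\<exists>n Fs. pure_complex m n Fs \<and> closed_complex m n Fs \<and> cond_i m n Fs \<and> cond_ii m n Fs \<and>
              cliques_simplices m n Fs \<and> clique_graph_iso m n Fs V E))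
    \<and> (\<forall>(m::nat) (n::nat) Fs. 3 \<le> m \<and> pure_complex m n Fs \<and> cond_i m n Fs \<and> cond_ii m n Fs \<and>
        cliques_simplices m n Fs \<and> card Fs \<le> m \<longrightarrow> closed_complex m n Fs)"
proof (intro conjI allI impI)
  fix m n :: nat and Fs :: "nat set set"
  assume "3 \<le> m \<and> pure_complex m n Fs \<and> cond_i m n Fs \<and> cond_ii m n Fs \<and>
    cliques_simplices m n Fs \<and> closed_wrt m Fs"
  then show "\<exists>fs. regular_sequence (polyring m n) fs \<and>
      ideal_gen (polyring m n) (set fs) = (J_Delta m n Fs :: 'a mpoly set)"
    by (intro closed_minors_regular_sequence) auto
next
  fix V :: "'v set" and E :: "'v set set" and m :: nat
  assume "simple_graph V E \<and> V \<noteq> {} \<and> card V \<le> m \<and> 3 \<le> m"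
  then show "\<exists>n Fs. pure_complex m n Fs \<and> closed_complex m n Fs \<and> cond_i m n Fs \<and> cond_ii m n Fs \<and>
      cliques_simplices m n Fs \<and> clique_graph_iso m n Fs V E"
    by (intro graph_realization) auto
next
  fix m n :: nat and Fs :: "nat set set"
  assume "3 \<le> m \<and> pure_complex m n Fs \<and> cond_i m n Fs \<and> cond_ii m n Fs \<and>
    cliques_simplices m n Fs \<and> card Fs \<le> m"
  then show "closed_complex m n Fs"
    by (intro few_facets_closed) auto
qed

end
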